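(* Let $(\Omega,\mathcal E_\Omega)$ be a finite-dimensional generalized probabilistic theory whose state space $\Omega$ is transitive and whose positive cone $V_+$ is self-dual with respect to $\langle\cdot,\cdot\rangle_{GL(\Omega)}$. Let $F=\{f_a\}_{a\in A}$ and $G=\{g_b\}_{b\in B}$ be ideal observables on $\Omega$ with outcome sets finite metric spaces $(A,d_A)$, $(B,d_B)$, and let $\widetilde M^{FG}=\{\widetilde m^{FG}_{ab}\}_{(a,b)\in A\times B}$ be an arbitrary observable on $A\times B$ with marginals $\widetilde M^F=\{\sum_b\widetilde m^{FG}_{ab}\}_a$ and $\widetilde M^G=\{\sum_a\widetilde m^{FG}_{ab}\}_b$. Then for all $\epsilon_1,\epsilon_2\in(0,1]$ with $\epsilon_1+\epsilon_2\le1$ there exists a state $\omega\in\Omega$ such that $$D_W(\widetilde M^F,F)\ge\frac{\epsilon_1}{2}W_{\epsilon_1+\epsilon_2}(\omega^F),\qquad D_W(\widetilde M^G,G)\ge\frac{\epsilon_2}{2}W_{\epsilon_1+\epsilon_2}(\omega^G).$$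
   Context: Setting: $V=\mathbb R^{N+1}$ with Euclidean inner product $(\cdot,\cdot)_E$. A state space $\Omega\subset V$ is a compact convex set with $\mathrm{span}(\Omega)=V$ and $0\notin\mathrm{aff}(\Omega)$; $V_+=\{\lambda\omega:\lambda\ge0,\omega\in\Omega\}$; the unit effect $u\in V^*$ satisfies $u(\omega)=1$ on $\Omega$; effects are $\mathcal E_\Omega=\{e\in V^*:0\le e(\omega)\le1\ \forall\omega\in\Omega\}$. An observable with finite outcome set $X$ is a family $\{e_x\}_{x\in X}$ of effects with $\sum_x e_x=u$ (the trivial observable $\{u\}$ is excluded). $\Omega^{\mathrm{ext}}$: extreme points of $\Omega$. An effect is pure if it is an extreme point of $\mathcal E_\Omega$; indecomposable if $e\neq0$ and $e=e_1+e_2$ with $e_1,e_2\in\mathcal E_\Omega$ forces $e_1,e_2$ to be scalar multiples of $e$. $F=\{f_a\}$ is ideal if each $f_a$ equals $\sum_{i\in I_a}e_i$ or $u-\sum_{i\in I_a}e_i$ for a finite family of pure indecomposable effects $e_i$. $GL(\Omega)$: group of linear bijections $T$ of $V$ with $T(\Omega)=\Omega$, $\mu$ its normalized Haar measure, $\langle x,y\rangle_{GL(\Omega)}=\int(Tx,Ty)_E\,d\mu(T)$. $\Omega$ is transitive if $GL(\Omega)$ acts transitively on $\Omega^{\mathrm{ext}}$; $V_+$ is self-dual w.r.t. $\langle\cdot,\cdot\rangle_{GL(\Omega)}$ if $V_+=\{y:\langle x,y\rangle_{GL(\Omega)}\ge0\ \forall x\in V_+\}$. $\omega^F=\{f_a(\omega)\}_a$.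 $O_{d_A}(a;w)=\{x\in A:d_A(x,a)\le w/2\}$; overall width $W_\epsilon(\omega^F)=\inf\{w>0:\exists a,\ \sum_{a'\in O_{d_A}(a;w)}f_{a'}(\omega)\ge1-\epsilon\}$. Werner's measure: with $\Lambda=\{h:A\to\mathbb R:|h(a_1)-h(a_2)|\le d_A(a_1,a_2)\ \forall a_1,a_2\}$, $D_W(\widetilde F,F)=\sup_{\omega\in\Omega}\sup_{h\in\Lambda}\left|\sum_{a\in A}h(a)\widetilde f_a(\omega)-\sum_{a\in A}h(a)f_a(\omega)\right|$. *)

theory Defs
  imports "HOL-Analysis.Analysis" "HOL-Probability.Probability"
begin

text \<open>Finite-dimensional GPT on V = real^'n (the Euclidean space of dimension N+1 = CARD('n)).
  The dual space V* is identified with V via the Euclidean inner product, so an effect e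
  acts on a state w as e \<bullet> w.\<close>

definition state_space :: "(real^'n) set \<Rightarrow> bool" where
  "state_space \<Omega> \<longleftrightarrow> compact \<Omega> \<and> convex \<Omega> \<and> span \<Omega> = UNIV \<and> 0 \<notin> affine hull \<Omega>"

definition positive_cone :: "(real^'n) set \<Rightarrow> (real^'n) set" where
  "positive_cone \<Omega> = {c *\<^sub>R w | c w. c \<ge> 0 \<and> w \<in> \<Omega>}"

definition unit_effect :: "(real^'n) set \<Rightarrow> real^'n" where
  "unit_effect \<Omega> = (SOME u. \<forall>w\<in>\<Omega>. u \<bullet> w = 1)"

definition effects :: "(real^'n) set \<Rightarrow> (real^'n) set" where
  "effects \<Omega> = {e. \<forall>w\<in>\<Omega>. 0 \<le> e \<bullet> w \<and> e \<bullet> w \<le> 1}"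

text \<open>Observable with finite outcome set X; the trivial observable {u} is excluded.\<close>
definition observable :: "(real^'n) set \<Rightarrow> 'x set \<Rightarrow> ('x \<Rightarrow> real^'n) \<Rightarrow> bool" where
  "observable \<Omega> X e \<longleftrightarrow> finite X \<and> X \<noteq> {} \<and> (\<forall>x\<in>X. e x \<in> effects \<Omega>)
     \<and> (\<Sum>x\<in>X. e x) = unit_effect \<Omega> \<and> e ` X \<noteq> {unit_effect \<Omega>}"

definition pure_effect :: "(real^'n) set \<Rightarrow> real^'n \<Rightarrow> bool" where
  "pure_effect \<Omega> e \<longleftrightarrow> e extreme_point_of (effects \<Omega>)"

definition indecomposable_effect :: "(real^'n) set \<Rightarrow> real^'n \<Rightarrow> bool" where
  "indecomposable_effect \<Omega> e \<longleftrightarrow> e \<in> effects \<Omega> \<and> e \<noteq> 0 \<and>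
     (\<forall>e1\<in>effects \<Omega>. \<forall>e2\<in>effects \<Omega>. e = e1 + e2 \<longrightarrow>
        (\<exists>c. e1 = c *\<^sub>R e) \<and> (\<exists>c. e2 = c *\<^sub>R e))"

definition ideal_observable :: "(real^'n) set \<Rightarrow> 'x set \<Rightarrow> ('x \<Rightarrow> real^'n) \<Rightarrow> bool" where
  "ideal_observable \<Omega> X f \<longleftrightarrow> observable \<Omega> X f \<and>
     (\<forall>a\<in>X. \<exists>es :: (real^'n) list.
        (\<forall>e\<in>set es. pure_effect \<Omega> e \<and> indecomposable_effect \<Omega> e) \<and>
        (f a = sum_list es \<or> f a = unit_effect \<Omega> - sum_list es))"

definition GL_state :: "(real^'n) set \<Rightarrow> (real^'n^'n) set" where
  "GL_state \<Omega> = {T. invertible T \<and> (\<lambda>x. T *v x) ` \<Omega> = \<Omega>}"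

definition transitive_state_space :: "(real^'n) set \<Rightarrow> bool" where
  "transitive_state_space \<Omega> \<longleftrightarrow>
     (\<forall>x y. x extreme_point_of \<Omega> \<longrightarrow> y extreme_point_of \<Omega> \<longrightarrow>
        (\<exists>T\<in>GL_state \<Omega>. T *v x = y))"

definition haar_GL :: "(real^'n) set \<Rightarrow> (real^'n^'n) measure \<Rightarrow> bool" where
  "haar_GL \<Omega> \<mu> \<longleftrightarrow> sets \<mu> = sets borel \<and> prob_space \<mu> \<and> GL_state \<Omega> \<in> sets \<mu>
     \<and> emeasure \<mu> (GL_state \<Omega>) = 1
     \<and> (\<forall>S\<in>GL_state \<Omega>. distr \<mu> borel (\<lambda>T. S ** T) = \<mu>)"

definition GL_inner :: "(real^'n^'n) measure \<Rightarrow> real^'n \<Rightarrow> real^'n \<Rightarrow> real" where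
  "GL_inner \<mu> x y = (\<integral>T. (T *v x) \<bullet> (T *v y) \<partial>\<mu>)"

definition self_dual_GL :: "(real^'n) set \<Rightarrow> bool" where
  "self_dual_GL \<Omega> \<longleftrightarrow> (\<exists>\<mu>. haar_GL \<Omega> \<mu> \<and>
     positive_cone \<Omega> = {y. \<forall>x\<in>positive_cone \<Omega>. GL_inner \<mu> x y \<ge> 0})"

definition overall_width ::
  "'a set \<Rightarrow> ('a \<Rightarrow> 'a \<Rightarrow> real) \<Rightarrow> ('a \<Rightarrow> real^'n) \<Rightarrow> real \<Rightarrow> real^'n \<Rightarrow> real" where
  "overall_width A d f \<epsilon> w = Inf {wd. wd > 0 \<and>
     (\<exists>a\<in>A. (\<Sum>a'\<in>{x\<in>A. d x a \<le> wd / 2}. f a' \<bullet> w) \<ge> 1 - \<epsilon>)}"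

definition lipschitz1 :: "'a set \<Rightarrow> ('a \<Rightarrow> 'a \<Rightarrow> real) \<Rightarrow> ('a \<Rightarrow> real) set" where
  "lipschitz1 A d = {h. \<forall>a1\<in>A. \<forall>a2\<in>A. \<bar>h a1 - h a2\<bar> \<le> d a1 a2}"

definition werner_D ::
  "(real^'n) set \<Rightarrow> 'a set \<Rightarrow> ('a \<Rightarrow> 'a \<Rightarrow> real) \<Rightarrow> ('a \<Rightarrow> real^'n) \<Rightarrow> ('a \<Rightarrow> real^'n) \<Rightarrow> real" where
  "werner_D \<Omega> A d ft f = (SUP w\<in>\<Omega>. SUP h\<in>lipschitz1 A d.
     \<bar>(\<Sum>a\<in>A. h a * (ft a \<bullet> w)) - (\<Sum>a\<in>A. h a * (f a \<bullet> w))\<bar>)"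

end

(* Averaging the Euclidean inner product over the Haar measure of GL(\<Omega>) gives an inner product
   whose quadratic form Q is GL(\<Omega>)-invariant, hence constant on the pure states by transitivity.
   By self-duality every effect e is represented by a vector \<hat>e = c \<omega> with \<omega> a state and
   <x, \<hat>e> = e(x); if e is pure and indecomposable, then \<omega> is pure and e(\<omega>) = 1.  Consequently
   the representing vector of every component of an ideal observable lies in the cone spanned by
   the states on which that component is certain.

   Write the representing vectors of the joint effects as \<kappa>_p \<sigma>_p with \<sigma>_p states.  Testing
   Werner's measure with the 1-Lipschitz functions d(., a) at the certain states, the
   \<kappa>-weighted average over p of the expected distance, in the state \<sigma>_p, between the outcome
   of F and fst p is at most D_W(M^F, F), and likewise for G.  Some single \<sigma>_p is then simultaneously good for both
   marginals in the proportions \<epsilon>1 : \<epsilon>2, and Markov's inequality turns the expected distances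
   into the width bounds. *)

theory Submission
  imports Defs
begin

lemma state_space_nonempty:
  assumes "state_space \<Omega>" shows "\<Omega> \<noteq> {}"
proof
  assume "\<Omega> = {}"
  then have "span \<Omega> = {0}" by simp
  with assms show False
    unfolding state_space_def by (metis UNIV_I axis_eq_0_iff singletonD zero_neq_one)
qed

lemma exists_unit_functional_if_0_notin_affine_hull:
  fixes S :: "'a::euclidean_space set"
  assumes "0 \<notin> affine hull S"
  obtains u where "\<And>w. w \<in> S \<Longrightarrow> u \<bullet> w = 1"
proof (cases "S = {}")
  case False
  then obtain w0 where w0: "w0 \<in> S" by blast
  define L where "L = span ((\<lambda>x. - w0 + x) ` S)"
  have "affine hull S = (\<lambda>x. w0 + x) ` L"
    unfolding L_def by (rule affine_hull_span_gen) (simp add: w0 hull_inc)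
  then have "w0 \<notin> L"
    using assms by (metis add.right_inverse image_eqI span_neg L_def)
  obtain y z where y: "y \<in> span L" and z: "\<And>v. v \<in> span L \<Longrightarrow> orthogonal z v" and yz: "w0 = y + z"
    by (rule orthogonal_subspace_decomp_exists[of L w0]) blast
  have "y \<in> L" using y unfolding L_def by (metis span_span)
  then have "z \<noteq> 0" using yz \<open>w0 \<notin> L\<close> by auto
  have "z \<bullet> w = z \<bullet> z" if "w \<in> S" for w
  proof -
    have "- w0 + w \<in> L" unfolding L_def using that by (intro span_base) auto
    then have "z \<bullet> (- w0 + w) = 0" "z \<bullet> y = 0"
      using z[of "- w0 + w"] z[of y] y by (auto simp: orthogonal_def span_base)
    then show ?thesis using yz by (simp add: inner_add_right inner_diff_right inner_minus_right)
  qed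
  then show ?thesis using \<open>z \<noteq> 0\<close> by (intro that[of "(1 / (z \<bullet> z)) *\<^sub>R z"]) simp
qed simp

lemma unit_effect_state:
  assumes "state_space \<Omega>" and "w \<in> \<Omega>"
  shows "unit_effect \<Omega> \<bullet> w = 1"
proof -
  obtain u where "\<And>w. w \<in> \<Omega> \<Longrightarrow> u \<bullet> w = 1"
    using assms(1) exists_unit_functional_if_0_notin_affine_hull unfolding state_space_def by metis
  then show ?thesis
    using someI_ex[of "\<lambda>u. \<forall>w\<in>\<Omega>. u \<bullet> w = 1"] assms(2) unfolding unit_effect_def by blast
qed

lemma sum_effects_at_state:
  assumes "state_space \<Omega>" and "(\<Sum>x\<in>X. e x) = unit_effect \<Omega>" and "w \<in> \<Omega>"
  shows "(\<Sum>x\<in>X. e x \<bullet> w) = 1"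
  using unit_effect_state[OF assms(1,3)] assms(2) by (simp add: inner_sum_left[symmetric])

lemma effect_nonneg: "e \<in> effects \<Omega> \<Longrightarrow> w \<in> \<Omega> \<Longrightarrow> 0 \<le> e \<bullet> w"
  and effect_le_1: "e \<in> effects \<Omega> \<Longrightarrow> w \<in> \<Omega> \<Longrightarrow> e \<bullet> w \<le> 1"
  unfolding effects_def by blast+

lemma effects_sum_subset:
  assumes "state_space \<Omega>" and "finite P" and "\<forall>p\<in>P. m p \<in> effects \<Omega>"
    and "(\<Sum>p\<in>P. m p) = unit_effect \<Omega>" and "Q \<subseteq> P"
  shows "(\<Sum>p\<in>Q. m p) \<in> effects \<Omega>"
  unfolding effects_def
proof (intro CollectI ballI conjI)
  fix w assume "w \<in> \<Omega>"
  have nonneg: "0 \<le> m p \<bullet> w" if "p \<in> P" for p using assms(3) that \<open>w \<in> \<Omega>\<close> effect_nonneg by blast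
  show "0 \<le> (\<Sum>p\<in>Q. m p) \<bullet> w"
    using nonneg assms(5) by (auto simp: inner_sum_left intro: sum_nonneg)
  have "(\<Sum>p\<in>Q. m p \<bullet> w) \<le> (\<Sum>p\<in>P. m p \<bullet> w)"
    using nonneg assms(2,5) by (intro sum_mono2) auto
  then show "(\<Sum>p\<in>Q. m p) \<bullet> w \<le> 1"
    using sum_effects_at_state[OF assms(1,4) \<open>w \<in> \<Omega>\<close>] by (simp add: inner_sum_left)
qed

lemma marginal_observables:
  assumes "state_space \<Omega>" and "finite A" and "finite B" and "observable \<Omega> (A \<times> B) m"
  shows "\<forall>a\<in>A. (\<Sum>b\<in>B. m (a, b)) \<in> effects \<Omega>" and "(\<Sum>a\<in>A. \<Sum>b\<in>B. m (a, b)) = unit_effect \<Omega>"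
    and "\<forall>b\<in>B. (\<Sum>a\<in>A. m (a, b)) \<in> effects \<Omega>" and "(\<Sum>b\<in>B. \<Sum>a\<in>A. m (a, b)) = unit_effect \<Omega>"
proof -
  have m: "finite (A \<times> B)" "\<forall>p\<in>A \<times> B. m p \<in> effects \<Omega>" "(\<Sum>p\<in>A \<times> B. m p) = unit_effect \<Omega>"
    using assms(4) unfolding observable_def by auto
  show "(\<Sum>a\<in>A. \<Sum>b\<in>B. m (a, b)) = unit_effect \<Omega>"
    using m(3) by (simp add: sum.cartesian_product)
  then show "(\<Sum>b\<in>B. \<Sum>a\<in>A. m (a, b)) = unit_effect \<Omega>" by (simp add: sum.swap[of _ A])
  show "\<forall>a\<in>A. (\<Sum>b\<in>B. m (a, b)) \<in> effects \<Omega>"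
  proof
    fix a assume "a \<in> A"
    have "(\<Sum>b\<in>B. m (a, b)) = (\<Sum>x\<in>{a}. \<Sum>b\<in>B. m (x, b))" by simp
    also have "\<dots> = (\<Sum>p\<in>{a} \<times> B. m p)" by (simp add: sum.cartesian_product)
    finally show "(\<Sum>b\<in>B. m (a, b)) \<in> effects \<Omega>"
      using effects_sum_subset[OF assms(1) m, of "{a} \<times> B"] \<open>a \<in> A\<close> by auto
  qed
  show "\<forall>b\<in>B. (\<Sum>a\<in>A. m (a, b)) \<in> effects \<Omega>"
  proof
    fix b assume "b \<in> B"
    have "(\<Sum>a\<in>A. m (a, b)) = (\<Sum>x\<in>A. \<Sum>y\<in>{b}. m (x, y))" by simp
    also have "\<dots> = (\<Sum>p\<in>A \<times> {b}. m p)" by (subst sum.cartesian_product) simp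
    finally show "(\<Sum>a\<in>A. m (a, b)) \<in> effects \<Omega>"
      using effects_sum_subset[OF assms(1) m, of "A \<times> {b}"] \<open>b \<in> B\<close> by auto
  qed
qed

section \<open>Werner's measure and the overall width\<close>

lemma werner_term_le_sum_dist:
  assumes "state_space \<Omega>" and "w \<in> \<Omega>" and "a0 \<in> A" and "finite A"
    and f: "\<forall>a\<in>A. f a \<in> effects \<Omega>" "(\<Sum>a\<in>A. f a) = unit_effect \<Omega>"
    and ft: "\<forall>a\<in>A. ft a \<in> effects \<Omega>" "(\<Sum>a\<in>A. ft a) = unit_effect \<Omega>"
    and h: "h \<in> lipschitz1 A d"
  shows "\<bar>(\<Sum>a\<in>A. h a * (ft a \<bullet> w)) - (\<Sum>a\<in>A. h a * (f a \<bullet> w))\<bar> \<le> (\<Sum>a\<in>A. d a a0)"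
proof -
  let ?\<delta> = "\<lambda>a. ft a \<bullet> w - f a \<bullet> w"
  have "(\<Sum>a\<in>A. ?\<delta> a) = 0"
    using sum_effects_at_state[OF assms(1) f(2) assms(2)] sum_effects_at_state[OF assms(1) ft(2) assms(2)]
    by (simp add: sum_subtractf)
  have "(\<Sum>a\<in>A. h a * (ft a \<bullet> w)) - (\<Sum>a\<in>A. h a * (f a \<bullet> w))
      = (\<Sum>a\<in>A. (h a - h a0) * ?\<delta> a) + h a0 * (\<Sum>a\<in>A. ?\<delta> a)"
    by (simp add: algebra_simps sum_subtractf sum_distrib_left sum.distrib)
  also have "\<dots> = (\<Sum>a\<in>A. (h a - h a0) * ?\<delta> a)"
    using \<open>(\<Sum>a\<in>A. ?\<delta> a) = 0\<close> by simp
  also have "\<bar>\<dots>\<bar> \<le> (\<Sum>a\<in>A. \<bar>h a - h a0\<bar> * \<bar>?\<delta> a\<bar>)"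
    unfolding abs_mult[symmetric] by (rule sum_abs)
  also have "\<dots> \<le> (\<Sum>a\<in>A. d a a0)"
  proof (rule sum_mono)
    fix a assume a: "a \<in> A"
    have hd: "\<bar>h a - h a0\<bar> \<le> d a a0" using h a \<open>a0 \<in> A\<close> unfolding lipschitz1_def by blast
    have "f a \<in> effects \<Omega>" "ft a \<in> effects \<Omega>" using f(1) ft(1) a by auto
    then have "\<bar>?\<delta> a\<bar> \<le> 1"
      using effect_nonneg effect_le_1 \<open>w \<in> \<Omega>\<close> by (smt (verit))
    then show "\<bar>h a - h a0\<bar> * \<bar>?\<delta> a\<bar> \<le> d a a0"
      using mult_mono[OF hd _ order_trans[OF abs_ge_zero hd] abs_ge_zero] by fastforce
  qed
  finally show ?thesis .
qed

lemma werner_D_ge: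
  assumes "state_space \<Omega>" and "finite A" and "A \<noteq> {}"
    and f: "\<forall>a\<in>A. f a \<in> effects \<Omega>" "(\<Sum>a\<in>A. f a) = unit_effect \<Omega>"
    and ft: "\<forall>a\<in>A. ft a \<in> effects \<Omega>" "(\<Sum>a\<in>A. ft a) = unit_effect \<Omega>"
    and "w \<in> \<Omega>" and "h \<in> lipschitz1 A d"
  shows "\<bar>(\<Sum>a\<in>A. h a * (ft a \<bullet> w)) - (\<Sum>a\<in>A. h a * (f a \<bullet> w))\<bar> \<le> werner_D \<Omega> A d ft f"
proof -
  define val where "val w h = \<bar>(\<Sum>a\<in>A. h a * (ft a \<bullet> w)) - (\<Sum>a\<in>A. h a * (f a \<bullet> w))\<bar>" for w h
  obtain a0 where "a0 \<in> A" using \<open>A \<noteq> {}\<close> by blast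
  have bound: "val w' h' \<le> (\<Sum>a\<in>A. d a a0)" if "w' \<in> \<Omega>" "h' \<in> lipschitz1 A d" for w' h'
    unfolding val_def using werner_term_le_sum_dist[OF assms(1) that(1) \<open>a0 \<in> A\<close> assms(2) f ft that(2)] .
  from \<open>h \<in> lipschitz1 A d\<close> have bdd_inner: "bdd_above (val w' ` lipschitz1 A d)" and
    SUP_le: "(SUP h'\<in>lipschitz1 A d. val w' h') \<le> (\<Sum>a\<in>A. d a a0)" if "w' \<in> \<Omega>" for w'
    using bound[OF that] by (auto intro!: bdd_aboveI2 cSUP_least)
  have "val w h \<le> (SUP h'\<in>lipschitz1 A d. val w h')"
    by (rule cSUP_upper[OF \<open>h \<in> lipschitz1 A d\<close> bdd_inner[OF \<open>w \<in> \<Omega>\<close>]])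
  also have "\<dots> \<le> (SUP w'\<in>\<Omega>. SUP h'\<in>lipschitz1 A d. val w' h')"
    using SUP_le by (intro cSUP_upper[OF \<open>w \<in> \<Omega>\<close>] bdd_aboveI2) auto
  finally show ?thesis unfolding werner_D_def val_def .
qed

lemma werner_D_nonneg:
  assumes "state_space \<Omega>" and "finite A" and "A \<noteq> {}" and "Metric_space A d"
    and "\<forall>a\<in>A. f a \<in> effects \<Omega>" "(\<Sum>a\<in>A. f a) = unit_effect \<Omega>"
    and "\<forall>a\<in>A. ft a \<in> effects \<Omega>" "(\<Sum>a\<in>A. ft a) = unit_effect \<Omega>"
  shows "0 \<le> werner_D \<Omega> A d ft f"
proof -
  obtain w where "w \<in> \<Omega>" using state_space_nonempty[OF assms(1)] by blast
  moreover have "(\<lambda>_. 0) \<in> lipschitz1 A d"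
    using Metric_space.nonneg[OF assms(4)] unfolding lipschitz1_def by simp
  ultimately show ?thesis using werner_D_ge[OF assms(1-3,5-)] by (meson abs_ge_zero order_trans)
qed

text \<open>Test with the 1-Lipschitz function \<open>\<lambda>x. d x a\<close>; at a state where \<open>f a\<close> is certain
  the \<open>f\<close>-term vanishes.\<close>

lemma werner_D_ge_expected_dist:
  assumes "state_space \<Omega>" and "finite A" and "Metric_space A d"
    and f: "\<forall>a\<in>A. f a \<in> effects \<Omega>" "(\<Sum>a\<in>A. f a) = unit_effect \<Omega>"
    and ft: "\<forall>a\<in>A. ft a \<in> effects \<Omega>" "(\<Sum>a\<in>A. ft a) = unit_effect \<Omega>"
    and "a \<in> A" and "w \<in> \<Omega>" and "f a \<bullet> w = 1"
  shows "(\<Sum>a'\<in>A. d a' a * (ft a' \<bullet> w)) \<le> werner_D \<Omega> A d ft f"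
proof -
  interpret Metric_space A d by fact
  have "(\<lambda>x. d x a) \<in> lipschitz1 A d"
    unfolding lipschitz1_def using \<open>a \<in> A\<close> triangle commute by (fastforce simp: abs_le_iff)
  have "(\<Sum>x\<in>A - {a}. f x \<bullet> w) = 0"
    using sum_effects_at_state[OF assms(1) f(2) \<open>w \<in> \<Omega>\<close>] \<open>f a \<bullet> w = 1\<close>
      sum.remove[OF \<open>finite A\<close> \<open>a \<in> A\<close>, of "\<lambda>x. f x \<bullet> w"] by simp
  then have "\<forall>x\<in>A - {a}. f x \<bullet> w = 0"
    using sum_nonneg_eq_0_iff[of "A - {a}" "\<lambda>x. f x \<bullet> w"] effect_nonneg f(1) \<open>w \<in> \<Omega>\<close> \<open>finite A\<close>
    by blast
  then have "(\<Sum>x\<in>A. d x a * (f x \<bullet> w)) = 0"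
    using \<open>a \<in> A\<close> by (intro sum.neutral) auto
  then show ?thesis
    using werner_D_ge[OF assms(1,2) _ f ft \<open>w \<in> \<Omega>\<close> \<open>(\<lambda>x. d x a) \<in> lipschitz1 A d\<close>] \<open>a \<in> A\<close>
    by (metis abs_le_D1 diff_zero empty_iff)
qed

text \<open>Markov's inequality for the distance to \<open>a0\<close>.\<close>

lemma overall_width_le:
  assumes "finite X" and "Metric_space X d" and "a0 \<in> X"
    and distr_nonneg: "\<forall>a\<in>X. 0 \<le> f a \<bullet> w" and distr_total: "(\<Sum>a\<in>X. f a \<bullet> w) = 1"
    and "0 < \<epsilon>1" and "0 < \<epsilon>" and "0 \<le> D"
    and expected: "\<epsilon>1 * (\<Sum>a\<in>X. d a a0 * (f a \<bullet> w)) \<le> \<epsilon> * D"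
  shows "\<epsilon>1 / 2 * overall_width X d f \<epsilon> w \<le> D"
proof -
  interpret Metric_space X d by fact
  define S where "S = {wd. wd > 0 \<and> (\<exists>a\<in>X. (\<Sum>a'\<in>{x\<in>X. d x a \<le> wd / 2}. f a' \<bullet> w) \<ge> 1 - \<epsilon>)}"
  have "bdd_below S" unfolding S_def by (intro bdd_belowI[where m=0]) auto
  have in_S: "2 * r \<in> S" if r: "D / \<epsilon>1 < r" for r
  proof -
    have "0 < r" using r \<open>0 \<le> D\<close> \<open>0 < \<epsilon>1\<close> by (smt (verit) divide_nonneg_pos)
    have "D < \<epsilon>1 * r" using r \<open>0 < \<epsilon>1\<close> by (simp add: divide_less_eq mult.commute)
    let ?In = "{x\<in>X. d x a0 \<le> r}" and ?Out = "{x\<in>X. \<not> d x a0 \<le> r}"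
    have "r * (\<Sum>a\<in>?Out. f a \<bullet> w) \<le> (\<Sum>a\<in>?Out. d a a0 * (f a \<bullet> w))"
      unfolding sum_distrib_left using distr_nonneg by (intro sum_mono mult_right_mono) auto
    also have "\<dots> \<le> (\<Sum>a\<in>X. d a a0 * (f a \<bullet> w))"
      using distr_nonneg \<open>finite X\<close> by (intro sum_mono2) auto
    finally have "(\<epsilon>1 * r) * (\<Sum>a\<in>?Out. f a \<bullet> w) \<le> \<epsilon> * (\<epsilon>1 * r)"
      using expected \<open>D < \<epsilon>1 * r\<close> \<open>0 < \<epsilon>1\<close> \<open>0 < \<epsilon>\<close>
      by (smt (verit, best) mult.assoc mult_left_mono mult_strict_left_mono)
    then have "(\<Sum>a\<in>?Out. f a \<bullet> w) \<le> \<epsilon>"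
      using \<open>0 < \<epsilon>1\<close> \<open>0 < r\<close> by (simp add: mult.commute[of \<epsilon>])
    moreover have "(\<Sum>a\<in>X. f a \<bullet> w) = (\<Sum>a\<in>?In. f a \<bullet> w) + (\<Sum>a\<in>?Out. f a \<bullet> w)"
      using \<open>finite X\<close> by (subst sum.union_disjoint[symmetric]) (auto intro!: sum.cong)
    ultimately have "1 - \<epsilon> \<le> (\<Sum>a\<in>?In. f a \<bullet> w)" using distr_total by linarith
    then show ?thesis unfolding S_def using \<open>0 < r\<close> \<open>a0 \<in> X\<close> by auto
  qed
  have "Inf S / 2 \<le> D / \<epsilon>1"
  proof (rule dense_ge)
    fix r assume "D / \<epsilon>1 < r"
    then have "Inf S \<le> 2 * r" using cInf_lower[OF in_S \<open>bdd_below S\<close>] by blast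
    then show "Inf S / 2 \<le> r" by simp
  qed
  then show ?thesis
    unfolding overall_width_def S_def[symmetric] using \<open>0 < \<epsilon>1\<close> by (simp add: field_simps)
qed

lemma overall_width_le_observable:
  assumes "state_space \<Omega>" and "finite X" and "Metric_space X d"
    and "\<forall>a\<in>X. f a \<in> effects \<Omega>" and "(\<Sum>a\<in>X. f a) = unit_effect \<Omega>"
    and "a0 \<in> X" and "w \<in> \<Omega>" and "0 < \<epsilon>1" and "0 < \<epsilon>" and "0 \<le> D"
    and "\<epsilon>1 * (\<Sum>a\<in>X. d a a0 * (f a \<bullet> w)) \<le> \<epsilon> * D"
  shows "\<epsilon>1 / 2 * overall_width X d f \<epsilon> w \<le> D"
  using assms(4) effect_nonneg \<open>w \<in> \<Omega>\<close>
  by (intro overall_width_le[OF assms(2,3,6) _ sum_effects_at_state[OF assms(1,5,7)] assms(8-11)]) blast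

lemma exists_below_weighted_average:
  fixes \<kappa> z :: "'p \<Rightarrow> real"
  assumes "finite P" and "\<forall>p\<in>P. 0 \<le> \<kappa> p" and "0 < (\<Sum>p\<in>P. \<kappa> p)"
    and "(\<Sum>p\<in>P. \<kappa> p * z p) \<le> c * (\<Sum>p\<in>P. \<kappa> p)"
  obtains p where "p \<in> P" and "0 < \<kappa> p" and "z p \<le> c"
proof -
  have "\<exists>p\<in>P. 0 < \<kappa> p \<and> z p \<le> c"
  proof (rule ccontr)
    assume "\<not> ?thesis"
    then have above: "c < z p" if "p \<in> P" "0 < \<kappa> p" for p
      using that by auto
    obtain p0 where "p0 \<in> P" "0 < \<kappa> p0"
      using assms(2,3) by (metis less_eq_real_def not_le sum_nonpos)
    have "0 < (\<Sum>p\<in>P. \<kappa> p * (z p - c))"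
    proof (rule sum_pos2[OF \<open>finite P\<close> \<open>p0 \<in> P\<close>])
      show "0 < \<kappa> p0 * (z p0 - c)" using above[OF \<open>p0 \<in> P\<close>] \<open>0 < \<kappa> p0\<close> by simp
      show "0 \<le> \<kappa> p * (z p - c)" if "p \<in> P" for p
        using above[OF that] assms(2) that by (cases "\<kappa> p = 0") (auto simp: less_eq_real_def)
    qed
    then show False
      using assms(4) by (simp add: algebra_simps sum_subtractf sum_distrib_left[symmetric] sum.distrib)
  qed
  then show ?thesis using that by blast
qed

text \<open>Since \<open>z / 0 = 0\<close>, for \<open>D = 0\<close> the normalised values vanish; the second claim then holds
  because the budget forces \<open>z p = 0\<close> wherever \<open>\<kappa> p > 0\<close>.\<close>

lemma weighted_budget_normalize:
  fixes \<kappa> z :: "'p \<Rightarrow> real"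
  assumes "finite P" and \<kappa>: "\<forall>p\<in>P. 0 \<le> \<kappa> p" and z: "\<forall>p\<in>P. 0 \<le> z p" and "0 \<le> D"
    and budget: "(\<Sum>p\<in>P. \<kappa> p * z p) \<le> D * (\<Sum>p\<in>P. \<kappa> p)"
  shows "(\<Sum>p\<in>P. \<kappa> p * (z p / D)) \<le> (\<Sum>p\<in>P. \<kappa> p)"
    and "p \<in> P \<Longrightarrow> 0 < \<kappa> p \<Longrightarrow> z p = D * (z p / D)"
proof -
  have "\<forall>p\<in>P. \<kappa> p * z p = 0" if "D = 0"
  proof -
    have "(\<Sum>p\<in>P. \<kappa> p * z p) = 0"
      using budget z \<kappa> that by (simp add: order_antisym sum_nonneg)
    then show ?thesis using z \<kappa> \<open>finite P\<close> by (subst (asm) sum_nonneg_eq_0_iff) auto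
  qed
  then show "(\<Sum>p\<in>P. \<kappa> p * (z p / D)) \<le> (\<Sum>p\<in>P. \<kappa> p)"
    and "p \<in> P \<Longrightarrow> 0 < \<kappa> p \<Longrightarrow> z p = D * (z p / D)"
    using budget \<kappa> \<open>0 \<le> D\<close>
    by (cases "D = 0", auto intro: sum_nonneg simp: sum_divide_distrib[symmetric] divide_le_eq mult.commute)+
qed

lemma exists_index_within_budgets:
  fixes \<kappa> x y :: "'p \<Rightarrow> real"
  assumes "finite P" and \<kappa>: "\<forall>p\<in>P. 0 \<le> \<kappa> p" and "0 < (\<Sum>p\<in>P. \<kappa> p)"
    and nonneg: "\<forall>p\<in>P. 0 \<le> x p \<and> 0 \<le> y p" and "0 \<le> Dx" and "0 \<le> Dy"
    and budget_x: "(\<Sum>p\<in>P. \<kappa> p * x p) \<le> Dx * (\<Sum>p\<in>P. \<kappa> p)"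
    and budget_y: "(\<Sum>p\<in>P. \<kappa> p * y p) \<le> Dy * (\<Sum>p\<in>P. \<kappa> p)"
    and "0 < \<epsilon>1" and "0 < \<epsilon>2"
  obtains p where "p \<in> P" and "\<epsilon>1 * x p \<le> (\<epsilon>1 + \<epsilon>2) * Dx" and "\<epsilon>2 * y p \<le> (\<epsilon>1 + \<epsilon>2) * Dy"
proof -
  let ?z = "\<lambda>p. \<epsilon>1 * (x p / Dx) + \<epsilon>2 * (y p / Dy)"
  have "(\<Sum>p\<in>P. \<kappa> p * ?z p)
      = \<epsilon>1 * (\<Sum>p\<in>P. \<kappa> p * (x p / Dx)) + \<epsilon>2 * (\<Sum>p\<in>P. \<kappa> p * (y p / Dy))"
    by (simp add: algebra_simps sum.distrib sum_distrib_left)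
  also have "\<dots> \<le> (\<epsilon>1 + \<epsilon>2) * (\<Sum>p\<in>P. \<kappa> p)"
    using weighted_budget_normalize(1)[OF \<open>finite P\<close> \<kappa> _ \<open>0 \<le> Dx\<close> budget_x]
      weighted_budget_normalize(1)[OF \<open>finite P\<close> \<kappa> _ \<open>0 \<le> Dy\<close> budget_y] nonneg budget_x budget_y \<open>0 \<le> Dx\<close> \<open>0 \<le> Dy\<close>
      \<open>0 < \<epsilon>1\<close> \<open>0 < \<epsilon>2\<close>
    by (simp add: distrib_right add_mono)
  finally obtain p where "p \<in> P" "0 < \<kappa> p" and p: "?z p \<le> \<epsilon>1 + \<epsilon>2"
    by (rule exists_below_weighted_average[OF \<open>finite P\<close> \<kappa> \<open>0 < (\<Sum>p\<in>P. \<kappa> p)\<close>])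
  have "0 \<le> x p / Dx" "0 \<le> y p / Dy" using nonneg \<open>p \<in> P\<close> \<open>0 \<le> Dx\<close> \<open>0 \<le> Dy\<close> by auto
  then have "\<epsilon>1 * (x p / Dx) \<le> \<epsilon>1 + \<epsilon>2" "\<epsilon>2 * (y p / Dy) \<le> \<epsilon>1 + \<epsilon>2"
    using p \<open>0 < \<epsilon>1\<close> \<open>0 < \<epsilon>2\<close> by (smt (verit) mult_nonneg_nonneg)+
  then have "\<epsilon>1 * x p \<le> (\<epsilon>1 + \<epsilon>2) * Dx" "\<epsilon>2 * y p \<le> (\<epsilon>1 + \<epsilon>2) * Dy"
    using weighted_budget_normalize(2)[OF \<open>finite P\<close> \<kappa> _ \<open>0 \<le> Dx\<close> budget_x]
      weighted_budget_normalize(2)[OF \<open>finite P\<close> \<kappa> _ \<open>0 \<le> Dy\<close> budget_y] nonneg budget_x budget_y \<open>0 \<le> Dx\<close> \<open>0 \<le> Dy\<close>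
      \<open>p \<in> P\<close> \<open>0 < \<kappa> p\<close>
    by (smt (verit, ccfv_threshold) mult.commute mult.left_commute mult_right_mono)+
  then show ?thesis using that \<open>p \<in> P\<close> by blast
qed

section \<open>Compactness of \<open>GL(\<Omega>)\<close>\<close>

definition state_preserving :: "(real^'n) set \<Rightarrow> (real^'n^'n) set" where
  "state_preserving \<Omega> = {T. \<forall>w\<in>\<Omega>. T *v w \<in> \<Omega>}"

lemma bounded_orbit_state_preserving:
  fixes \<Omega> :: "(real^'n) set"
  assumes "state_space \<Omega>"
  obtains C where "\<And>T. T \<in> state_preserving \<Omega> \<Longrightarrow> norm (T *v x) \<le> C"
proof -
  obtain R where R: "\<And>w. w \<in> \<Omega> \<Longrightarrow> norm w \<le> R"
    using assms unfolding state_space_def by (meson bounded_iff compact_imp_bounded)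
  have "x \<in> span \<Omega>" using assms unfolding state_space_def by simp
  then obtain t r where t: "finite t" "t \<subseteq> \<Omega>" and x: "x = (\<Sum>a\<in>t. r a *\<^sub>R a)"
    unfolding span_explicit by blast
  have "norm (T *v x) \<le> (\<Sum>a\<in>t. \<bar>r a\<bar> * R)" if "T \<in> state_preserving \<Omega>" for T
  proof -
    have "norm (T *v x) = norm (\<Sum>a\<in>t. r a *\<^sub>R (T *v a))"
      unfolding x by (simp add: linear_sum[OF matrix_vector_mul_linear] matrix_vector_mult_scaleR o_def)
    also have "\<dots> \<le> (\<Sum>a\<in>t. norm (r a *\<^sub>R (T *v a)))" by (rule norm_sum)
    also have "\<dots> \<le> (\<Sum>a\<in>t. \<bar>r a\<bar> * R)"
    proof (intro sum_mono)
      fix a assume "a \<in> t"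
      then have "norm (T *v a) \<le> R" using that t R unfolding state_preserving_def by blast
      then show "norm (r a *\<^sub>R (T *v a)) \<le> \<bar>r a\<bar> * R" by (simp add: mult_left_mono)
    qed
    finally show ?thesis .
  qed
  then show ?thesis using that by blast
qed

lemma bounded_state_preserving:
  fixes \<Omega> :: "(real^'n) set"
  assumes "state_space \<Omega>"
  shows "bounded (state_preserving \<Omega>)"
proof -
  have "\<forall>j. \<exists>C. \<forall>T::real^'n^'n. T \<in> state_preserving \<Omega> \<longrightarrow> norm (T *v axis j 1) \<le> C"
    using bounded_orbit_state_preserving[OF assms] by metis
  then obtain C where C: "\<And>j T. T \<in> state_preserving \<Omega> \<Longrightarrow> norm (T *v axis j 1) \<le> C j"
    by metis
  have "norm T \<le> (\<Sum>i::'n\<in>UNIV. \<Sum>j\<in>UNIV. C j)" if "T \<in> state_preserving \<Omega>" for T :: "real^'n^'n"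
  proof -
    have entry: "\<bar>T $ i $ j\<bar> \<le> C j" for i j
      using component_le_norm_cart[of "T *v axis j 1" i] C[OF that, of j]
      by (simp add: matrix_vector_mult_def axis_def if_distrib cong: if_cong)
    have "norm (T $ i) \<le> (\<Sum>j\<in>UNIV. C j)" for i
      using norm_le_l1_cart[of "T $ i"] sum_mono[of UNIV "\<lambda>j. \<bar>T $ i $ j\<bar>" C] entry
      by simp
    then have "(\<Sum>i\<in>UNIV. norm (T $ i)) \<le> (\<Sum>i::'n\<in>UNIV. \<Sum>j\<in>UNIV. C j)"
      by (intro sum_mono)
    moreover have "norm T \<le> (\<Sum>i\<in>UNIV. norm (T $ i))"
      by (simp add: norm_vec_def L2_set_le_sum)
    ultimately show ?thesis by linarith
  qed
  then show ?thesis unfolding bounded_iff by blast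
qed

lemma continuous_on_matrix_vector_mult [continuous_intros]:
  fixes f :: "'a::topological_space \<Rightarrow> real^'n^'m"
  shows "continuous_on S f \<Longrightarrow> continuous_on S g \<Longrightarrow> continuous_on S (\<lambda>x. f x *v g x)"
  unfolding matrix_vector_mult_def by (intro continuous_intros)

lemma continuous_on_matrix_matrix_mult [continuous_intros]:
  fixes f :: "'a::topological_space \<Rightarrow> real^'n^'m"
  shows "continuous_on S f \<Longrightarrow> continuous_on S g \<Longrightarrow> continuous_on S (\<lambda>x. f x ** g x)"
  unfolding matrix_matrix_mult_def by (intro continuous_intros)

lemma isCont_matrix_vector_mult_left: "isCont (\<lambda>T::real^'n^'m. T *v x) T"
proof -
  have "continuous_on UNIV (\<lambda>T::real^'n^'m. T *v x)" by (intro continuous_intros)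
  then show ?thesis by (simp add: continuous_on_eq_continuous_at)
qed

lemma isCont_matrix_matrix_mult: "isCont (\<lambda>T::real^'n^'m. S ** T) T"
proof -
  have "continuous_on UNIV (\<lambda>T::real^'n^'m. S ** T)" by (intro continuous_intros)
  then show ?thesis by (simp add: continuous_on_eq_continuous_at)
qed

lemma closed_state_preserving:
  fixes \<Omega> :: "(real^'n) set"
  assumes "state_space \<Omega>"
  shows "closed (state_preserving \<Omega>)"
proof -
  have "closed \<Omega>" using assms unfolding state_space_def by (simp add: compact_imp_closed)
  have "closed ((\<lambda>T::real^'n^'n. T *v w) -` \<Omega>)" for w
    using continuous_closed_vimage[OF \<open>closed \<Omega>\<close> isCont_matrix_vector_mult_left] .
  moreover have "state_preserving \<Omega> = (\<Inter>w\<in>\<Omega>. (\<lambda>T. T *v w) -` \<Omega>)"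
    unfolding state_preserving_def by auto
  ultimately show ?thesis by (simp add: closed_INT)
qed

lemma GL_state_eq_projection:
  fixes \<Omega> :: "(real^'n) set"
  shows "GL_state \<Omega> = fst ` {p. fst p ** snd p = mat 1 \<and> p \<in> state_preserving \<Omega> \<times> state_preserving \<Omega>}"
proof (intro equalityI subsetI)
  fix T assume T: "T \<in> GL_state \<Omega>"
  then obtain T' where TT': "T ** T' = mat 1" "T' ** T = mat 1"
    unfolding GL_state_def invertible_def by blast
  have im: "(\<lambda>x. T *v x) ` \<Omega> = \<Omega>" using T unfolding GL_state_def by blast
  have "T' *v w \<in> \<Omega>" if "w \<in> \<Omega>" for w
  proof -
    have "w \<in> (\<lambda>x. T *v x) ` \<Omega>" using im that by simp
    then obtain w' where "w' \<in> \<Omega>" "w = T *v w'" by blast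
    then show ?thesis by (simp add: matrix_vector_mul_assoc TT'(2))
  qed
  then have "T' \<in> state_preserving \<Omega>" unfolding state_preserving_def by blast
  moreover have "T \<in> state_preserving \<Omega>" using im unfolding state_preserving_def by blast
  ultimately show "T \<in> fst ` {p. fst p ** snd p = mat 1 \<and> p \<in> state_preserving \<Omega> \<times> state_preserving \<Omega>}"
    using TT' by (intro image_eqI[of _ _ "(T, T')"]) auto
next
  fix T assume "T \<in> fst ` {p. fst p ** snd p = mat 1 \<and> p \<in> state_preserving \<Omega> \<times> state_preserving \<Omega>}"
  then obtain T' where TT': "T ** T' = mat 1"
    and preserving: "T \<in> state_preserving \<Omega>" "T' \<in> state_preserving \<Omega>"
    by auto
  have "\<Omega> \<subseteq> (\<lambda>x. T *v x) ` \<Omega>"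
  proof
    fix w assume "w \<in> \<Omega>"
    then have "T' *v w \<in> \<Omega>" using preserving unfolding state_preserving_def by auto
    moreover have "w = T *v (T' *v w)" using TT' by (simp add: matrix_vector_mul_assoc)
    ultimately show "w \<in> (\<lambda>x. T *v x) ` \<Omega>" by (rule rev_image_eqI)
  qed
  then have "(\<lambda>x. T *v x) ` \<Omega> = \<Omega>"
    using preserving unfolding state_preserving_def by auto
  moreover have "invertible T" using TT' by (auto simp: invertible_right_inverse)
  ultimately show "T \<in> GL_state \<Omega>" unfolding GL_state_def by simp
qed

lemma compact_GL_state:
  fixes \<Omega> :: "(real^'n) set"
  assumes "state_space \<Omega>"
  shows "compact (GL_state \<Omega>)"
proof -
  let ?K = "{p. fst p ** snd p = mat 1 \<and> p \<in> state_preserving \<Omega> \<times> state_preserving \<Omega>}"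
  have K: "?K = {p. fst p ** snd p = mat 1} \<inter> (state_preserving \<Omega> \<times> state_preserving \<Omega>)"
    by auto
  have "closed {p::(real^'n^'n) \<times> (real^'n^'n). fst p ** snd p = mat 1}"
    by (intro closed_Collect_eq continuous_intros)
  then have "closed ?K"
    unfolding K using closed_state_preserving[OF assms] by (intro closed_Int closed_Times)
  moreover have "bounded ?K"
    unfolding K using bounded_state_preserving[OF assms]
    by (intro bounded_Int disjI2 bounded_Times)
  ultimately have "compact (fst ` ?K)"
    by (intro compact_continuous_image continuous_intros) (simp add: compact_eq_bounded_closed)
  then show ?thesis by (simp add: GL_state_eq_projection)
qed

lemma mat_1_GL_state: "mat 1 \<in> GL_state \<Omega>"
  unfolding GL_state_def by (auto simp: invertible_def)

lemma GL_state_mult: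
  assumes "S \<in> GL_state \<Omega>" and "T \<in> GL_state \<Omega>"
  shows "S ** T \<in> GL_state \<Omega>"
proof -
  have "(\<lambda>x. (S ** T) *v x) ` \<Omega> = (\<lambda>x. S *v x) ` ((\<lambda>x. T *v x) ` \<Omega>)"
    by (auto simp: matrix_vector_mul_assoc[symmetric])
  then show ?thesis using assms unfolding GL_state_def by (simp add: invertible_mult)
qed

lemma GL_state_inverse:
  assumes "T \<in> GL_state \<Omega>"
  obtains T' where "T' \<in> GL_state \<Omega>" and "T' ** T = mat 1"
proof -
  obtain T' where TT': "T ** T' = mat 1" "T' ** T = mat 1"
    using assms unfolding GL_state_def invertible_def by blast
  have "(\<lambda>x. T' *v x) ` ((\<lambda>x. T *v x) ` \<Omega>) = \<Omega>"
    by (simp add: image_image matrix_vector_mul_assoc TT'(2))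
  then have "(\<lambda>x. T' *v x) ` \<Omega> = \<Omega>"
    using assms unfolding GL_state_def by simp
  then have "T' \<in> GL_state \<Omega>"
    using TT' unfolding GL_state_def invertible_def by auto
  then show ?thesis using that TT' by blast
qed

section \<open>The Haar-averaged inner product\<close>

locale GL_haar =
  fixes \<Omega> :: "(real^'n) set" and \<mu> :: "(real^'n^'n) measure"
  assumes state_space: "state_space \<Omega>" and haar: "haar_GL \<Omega> \<mu>"
begin

abbreviation "GL \<equiv> GL_state \<Omega>"

sublocale prob_space \<mu>
  using haar unfolding haar_GL_def by blast

lemma sets_eq_borel: "sets \<mu> = sets borel"
  using haar unfolding haar_GL_def by blast

lemma space_eq_UNIV: "space \<mu> = UNIV"
  using sets_eq_imp_space_eq[OF sets_eq_borel] by simp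

lemma distr_left_translate: "S \<in> GL \<Longrightarrow> distr \<mu> borel (\<lambda>T. S ** T) = \<mu>"
  using haar unfolding haar_GL_def by blast

lemma AE_in_GL: "AE T in \<mu>. T \<in> GL"
  using haar AE_prob_1 unfolding haar_GL_def by (simp add: measure_def)

lemma borel_measurable_continuous: "continuous_on UNIV f \<Longrightarrow> f \<in> borel_measurable \<mu>"
  using measurable_cong_sets[OF sets_eq_borel refl] borel_measurable_continuous_onI by blast

lemma integrable_continuous:
  fixes f :: "real^'n^'n \<Rightarrow> real"
  assumes "continuous_on UNIV f"
  shows "integrable \<mu> f"
proof -
  have "bounded (f ` GL)"
    using assms compact_GL_state[OF state_space]
    by (intro compact_imp_bounded compact_continuous_image) (auto intro: continuous_on_subset)
  then obtain B where "\<And>T. T \<in> GL \<Longrightarrow> norm (f T) \<le> B" by (auto simp: bounded_iff)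
  then show ?thesis
    using AE_in_GL borel_measurable_continuous[OF assms]
    by (intro integrable_const_bound[where B=B]) auto
qed

lemma integral_left_translate:
  fixes f :: "real^'n^'n \<Rightarrow> real"
  assumes "S \<in> GL" and "continuous_on UNIV f"
  shows "(\<integral>T. f (S ** T) \<partial>\<mu>) = (\<integral>T. f T \<partial>\<mu>)"
proof -
  have "(\<lambda>T. S ** T) \<in> measurable \<mu> borel"
    by (intro borel_measurable_continuous continuous_intros)
  then have "(\<integral>T. f (S ** T) \<partial>\<mu>) = integral\<^sup>L (distr \<mu> borel (\<lambda>T. S ** T)) f"
    using borel_measurable_continuous_onI[OF assms(2)] by (simp add: integral_distr)
  then show ?thesis using distr_left_translate[OF assms(1)] by simp
qed

text \<open>The Haar measure has full support on \<open>GL(\<Omega>)\<close>: the left translates of a null open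
  set meeting \<open>GL(\<Omega>)\<close> would cover the compact group by finitely many null sets.\<close>

lemma open_null_disjoint_GL:
  assumes "open U" and "emeasure \<mu> U = 0"
  shows "U \<inter> GL = {}"
proof (rule ccontr)
  assume "U \<inter> GL \<noteq> {}"
  then obtain P where "P \<in> U" "P \<in> GL" by blast
  define V where "V S = (\<lambda>T. S ** T) -` U" for S :: "real^'n^'n"
  have open_V: "open (V S)" for S
    unfolding V_def by (rule continuous_open_vimage[OF \<open>open U\<close> isCont_matrix_matrix_mult])
  have cover: "GL \<subseteq> (\<Union>S\<in>GL. V S)"
  proof
    fix Q assume "Q \<in> GL"
    then obtain Q' where "Q' \<in> GL" "Q' ** Q = mat 1" by (rule GL_state_inverse)
    then have "(P ** Q') ** Q = P" by (simp only: matrix_mul_assoc[symmetric] matrix_mul_rid)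
    then have "Q \<in> V (P ** Q')" using \<open>P \<in> U\<close> unfolding V_def by simp
    then show "Q \<in> (\<Union>S\<in>GL. V S)" using GL_state_mult[OF \<open>P \<in> GL\<close> \<open>Q' \<in> GL\<close>] by blast
  qed
  obtain C where C: "C \<subseteq> GL" "finite C" "GL \<subseteq> (\<Union>S\<in>C. V S)"
    by (rule compactE_image[OF compact_GL_state[OF state_space] open_V cover])
  have null_V: "emeasure \<mu> (V S) = 0" if "S \<in> GL" for S
  proof -
    have "(\<lambda>T. S ** T) \<in> measurable \<mu> borel"
      by (intro borel_measurable_continuous continuous_intros)
    then have "emeasure (distr \<mu> borel (\<lambda>T. S ** T)) U = emeasure \<mu> (V S)"
      using \<open>open U\<close> by (simp add: emeasure_distr V_def space_eq_UNIV)
    then show ?thesis using distr_left_translate[OF that] assms(2) by simp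
  qed
  have "emeasure \<mu> GL \<le> emeasure \<mu> (\<Union>S\<in>C. V S)"
    using C(3) open_V by (intro emeasure_mono) (auto simp: sets_eq_borel intro!: borel_open)
  also have "\<dots> \<le> (\<Sum>S\<in>C. emeasure \<mu> (V S))"
    using open_V sets_eq_borel by (intro emeasure_subadditive_finite[OF C(2)]) auto
  also have "\<dots> = 0" using null_V C(1) by (auto intro: sum.neutral)
  finally show False using haar unfolding haar_GL_def by auto
qed

lemma continuous_integral_eq_0_imp_zero_on_GL:
  fixes g :: "real^'n^'n \<Rightarrow> real"
  assumes "continuous_on UNIV g" and "\<forall>T\<in>GL. 0 \<le> g T" and "(\<integral>T. g T \<partial>\<mu>) = 0"
    and "T \<in> GL"
  shows "g T = 0"
proof -
  have "AE T in \<mu>. 0 \<le> g T" using AE_in_GL by eventually_elim (use assms(2) in auto)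
  then have "AE T in \<mu>. g T = 0"
    using integral_nonneg_eq_0_iff_AE[OF integrable_continuous[OF assms(1)]] assms(3) by simp
  moreover have U: "open {T. g T \<noteq> 0}"
    by (rule open_Collect_neq[OF assms(1) continuous_on_const])
  moreover have "{T. g T \<noteq> 0} \<in> sets \<mu>" using U sets_eq_borel by simp
  ultimately have "emeasure \<mu> {T. g T \<noteq> 0} = 0"
    using AE_iff_measurable[of "{T. g T \<noteq> 0}" \<mu> "\<lambda>T. g T = 0"] by (simp add: space_eq_UNIV)
  then show ?thesis using open_null_disjoint_GL[OF U] \<open>T \<in> GL\<close> by blast
qed

lemma integrable_GL_inner: "integrable \<mu> (\<lambda>T. (T *v x) \<bullet> (T *v y))"
  by (intro integrable_continuous continuous_intros)

lemma GL_inner_commute: "GL_inner \<mu> x y = GL_inner \<mu> y x"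
  unfolding GL_inner_def by (simp add: inner_commute)

lemma linear_GL_inner_left: "linear (\<lambda>x. GL_inner \<mu> x y)"
proof
  show "GL_inner \<mu> (a + b) y = GL_inner \<mu> a y + GL_inner \<mu> b y" for a b
    unfolding GL_inner_def using integrable_GL_inner[of a y] integrable_GL_inner[of b y]
    by (simp add: matrix_vector_right_distrib inner_add_left)
  show "GL_inner \<mu> (c *\<^sub>R a) y = c *\<^sub>R GL_inner \<mu> a y" for c a
    unfolding GL_inner_def by (simp add: matrix_vector_mult_scaleR)
qed

lemma GL_inner_axis_expansion:
  "GL_inner \<mu> x y = (\<Sum>i\<in>UNIV. x $ i * GL_inner \<mu> (axis i 1) y)"
proof -
  have "x = (\<Sum>i\<in>UNIV. x $ i *\<^sub>R axis i 1)"
    by (simp add: vec_eq_iff sum_component axis_def if_distrib[of "\<lambda>t. _ * t"] cong: if_cong)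
  then have "GL_inner \<mu> x y = GL_inner \<mu> (\<Sum>i\<in>UNIV. x $ i *\<^sub>R axis i 1) y"
    by (rule arg_cong)
  also have "\<dots> = (\<Sum>i\<in>UNIV. x $ i * GL_inner \<mu> (axis i 1) y)"
    using linear_sum[OF linear_GL_inner_left, of "\<lambda>i. x $ i *\<^sub>R axis i 1" UNIV y]
      linear_scale[OF linear_GL_inner_left] by simp
  finally show ?thesis .
qed

definition gram :: "real^'n^'n" where
  "gram = (\<chi> i j. GL_inner \<mu> (axis i 1) (axis j 1))"

lemma GL_inner_gram: "GL_inner \<mu> x y = x \<bullet> (gram *v y)"
proof -
  have "GL_inner \<mu> (axis i 1) y = (\<Sum>j\<in>UNIV. y $ j * GL_inner \<mu> (axis i 1) (axis j 1))" for i
    using GL_inner_axis_expansion[of y "axis i 1"] by (simp add: GL_inner_commute)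
  then have "GL_inner \<mu> x y = (\<Sum>i\<in>UNIV. x $ i * (\<Sum>j\<in>UNIV. y $ j * gram $ i $ j))"
    unfolding gram_def by (subst GL_inner_axis_expansion) simp
  also have "\<dots> = x \<bullet> (gram *v y)"
    by (simp add: inner_vec_def matrix_vector_mult_def mult.commute)
  finally show ?thesis .
qed

lemma GL_inner_self_nonneg: "0 \<le> GL_inner \<mu> x x"
  unfolding GL_inner_def by (rule Bochner_Integration.integral_nonneg) simp

lemma GL_inner_self_pos:
  assumes "x \<noteq> 0" shows "0 < GL_inner \<mu> x x"
proof (rule ccontr)
  assume "\<not> 0 < GL_inner \<mu> x x"
  then have "(\<integral>T. (T *v x) \<bullet> (T *v x) \<partial>\<mu>) = 0"
    using GL_inner_self_nonneg[of x] unfolding GL_inner_def by linarith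
  then have "AE T in \<mu>. (T *v x) \<bullet> (T *v x) = 0"
    using integral_nonneg_eq_0_iff_AE[OF integrable_GL_inner] by simp
  then have "AE T in \<mu>. False"
    using AE_in_GL
  proof eventually_elim
    case (elim T)
    obtain T' where "T' ** T = mat 1" using GL_state_inverse[OF \<open>T \<in> GL\<close>] by blast
    have "T *v x = 0" using elim(1) by simp
    have "x = T' *v (T *v x)" using \<open>T' ** T = mat 1\<close> by (simp add: matrix_vector_mul_assoc)
    also have "\<dots> = 0" using \<open>T *v x = 0\<close> by simp
    finally show False using assms by contradiction
  qed
  then show False by simp
qed

lemma continuous_on_GL_inner_self: "continuous_on UNIV (\<lambda>R::real^'n^'n. GL_inner \<mu> (R *v y) (R *v y))"
  unfolding GL_inner_gram by (intro continuous_intros)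

lemma sets_pair_eq_borel: "sets (\<mu> \<Otimes>\<^sub>M \<mu>) = sets (borel :: ((real^'n^'n) \<times> (real^'n^'n)) measure)"
  using sets_pair_measure_cong[OF sets_eq_borel sets_eq_borel] borel_prod by metis

lemma borel_measurable_pair_continuous:
  fixes F :: "(real^'n^'n) \<times> (real^'n^'n) \<Rightarrow> real"
  assumes "continuous_on UNIV F"
  shows "F \<in> borel_measurable (\<mu> \<Otimes>\<^sub>M \<mu>)"
  using measurable_cong_sets[OF sets_pair_eq_borel refl] borel_measurable_continuous_onI[OF assms]
  by blast

lemma integrable_pair_continuous:
  fixes F :: "(real^'n^'n) \<times> (real^'n^'n) \<Rightarrow> real"
  assumes "continuous_on UNIV F"
  shows "integrable (\<mu> \<Otimes>\<^sub>M \<mu>) F"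
proof -
  interpret pair_prob_space \<mu> \<mu> ..
  have "bounded (F ` (GL \<times> GL))"
    using assms compact_GL_state[OF state_space]
    by (intro compact_imp_bounded compact_continuous_image compact_Times)
      (auto intro: continuous_on_subset)
  then obtain B where B: "\<And>p. p \<in> GL \<times> GL \<Longrightarrow> norm (F p) \<le> B" by (auto simp: bounded_iff)
  have "AE p in \<mu> \<Otimes>\<^sub>M \<mu>. p \<in> GL \<times> GL"
  proof (rule AE_pair_measure)
    have "closed (GL \<times> GL)"
      using compact_GL_state[OF state_space] by (simp add: compact_imp_closed closed_Times)
    then have "GL \<times> GL \<in> sets (\<mu> \<Otimes>\<^sub>M \<mu>)"
      unfolding sets_pair_eq_borel by (rule borel_closed)
    moreover have "{p \<in> space (\<mu> \<Otimes>\<^sub>M \<mu>). p \<in> GL \<times> GL} = GL \<times> GL"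
      by (auto simp: space_pair_measure space_eq_UNIV)
    ultimately show "{p \<in> space (\<mu> \<Otimes>\<^sub>M \<mu>). p \<in> GL \<times> GL} \<in> sets (\<mu> \<Otimes>\<^sub>M \<mu>)"
      by (simp only:)
    show "AE x in \<mu>. AE y in \<mu>. (x, y) \<in> GL \<times> GL"
      using AE_in_GL by eventually_elim (use AE_in_GL in auto)
  qed
  then have "AE p in \<mu> \<Otimes>\<^sub>M \<mu>. norm (F p) \<le> B"
    by eventually_elim (rule B)
  then show ?thesis
    using borel_measurable_pair_continuous[OF assms] by (rule P.integrable_const_bound)
qed

lemma integral_GL_inner_self_translate:
  "(\<integral>R. GL_inner \<mu> (R *v y) (R *v y) \<partial>\<mu>) = GL_inner \<mu> y y"
proof -
  define G where "G R T = ((T ** R) *v y) \<bullet> ((T ** R) *v y)" for R T :: "real^'n^'n"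
  have cont: "continuous_on UNIV (\<lambda>(R, T). G R T)" "continuous_on UNIV (\<lambda>(T, R). G R T)"
    unfolding G_def case_prod_beta by (intro continuous_intros)+
  note G_integrable = integrable_pair_continuous[OF cont(1)]
  note G_swap_measurable = borel_measurable_pair_continuous[OF cont(2)]
  have "(\<integral>T. \<integral>R. G R T \<partial>\<mu> \<partial>\<mu>) = (\<integral>R. \<integral>T. G R T \<partial>\<mu> \<partial>\<mu>)"
    by (rule pair_sigma_finite.Fubini_integral[OF _ G_integrable]) unfold_locales
  moreover have "(\<integral>T. G R T \<partial>\<mu>) = GL_inner \<mu> (R *v y) (R *v y)" for R
    unfolding G_def GL_inner_def by (simp add: matrix_vector_mul_assoc)
  moreover have "AE T in \<mu>. (\<integral>R. G R T \<partial>\<mu>) = GL_inner \<mu> y y"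
    using AE_in_GL
  proof eventually_elim
    case (elim T)
    show ?case
      using integral_left_translate[OF elim, of "\<lambda>S. (S *v y) \<bullet> (S *v y)"]
      unfolding G_def GL_inner_def by (simp add: continuous_intros)
  qed
  then have "(\<integral>T. \<integral>R. G R T \<partial>\<mu> \<partial>\<mu>) = (\<integral>T. GL_inner \<mu> y y \<partial>\<mu>)"
    using borel_measurable_lebesgue_integral[OF G_swap_measurable] by (intro integral_cong_AE) auto
  ultimately show ?thesis by (simp add: prob_space)
qed

text \<open>Left invariance of \<open>\<mu>\<close> only says that \<open>R \<mapsto> Q (R y)\<close>, with \<open>Q z = GL_inner \<mu> z z\<close>,
  has average \<open>Q y\<close>.  Applied at a point \<open>R0 y\<close> where this continuous function is maximal
  on the compact group, the average forces it to be constant on the support of \<open>\<mu>\<close>, which is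
  all of \<open>GL(\<Omega>)\<close>.\<close>

lemma GL_inner_self_invariant:
  assumes "S \<in> GL"
  shows "GL_inner \<mu> (S *v y) (S *v y) = GL_inner \<mu> y y"
proof -
  let ?Q = "\<lambda>z. GL_inner \<mu> z z"
  obtain R0 where "R0 \<in> GL" and max: "\<And>R. R \<in> GL \<Longrightarrow> ?Q (R *v y) \<le> ?Q (R0 *v y)"
    using continuous_attains_sup[OF compact_GL_state[OF state_space] _
        continuous_on_subset[OF continuous_on_GL_inner_self]]
    mat_1_GL_state by blast
  define m where "m = ?Q (R0 *v y)"
  define g where "g R = m - ?Q (R *v (R0 *v y))" for R
  have "continuous_on UNIV g"
    unfolding g_def by (intro continuous_intros continuous_on_GL_inner_self)
  moreover have "\<forall>R\<in>GL. 0 \<le> g R"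
    using max[OF GL_state_mult[OF _ \<open>R0 \<in> GL\<close>]] by (simp add: g_def m_def matrix_vector_mul_assoc)
  moreover have "(\<integral>R. g R \<partial>\<mu>) = 0"
    using integrable_continuous[OF continuous_on_GL_inner_self]
    by (simp add: g_def m_def prob_space integral_GL_inner_self_translate)
  ultimately have g_zero: "g R = 0" if "R \<in> GL" for R
    using continuous_integral_eq_0_imp_zero_on_GL that by blast
  obtain R0' where "R0' \<in> GL" "R0' ** R0 = mat 1"
    using \<open>R0 \<in> GL\<close> by (rule GL_state_inverse)
  have "?Q (R *v y) = m" if "R \<in> GL" for R
  proof -
    have "(R ** R0') *v (R0 *v y) = R *v y"
      using \<open>R0' ** R0 = mat 1\<close> by (simp add: matrix_vector_mul_assoc matrix_mul_assoc[symmetric])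
    then show ?thesis using g_zero[OF GL_state_mult[OF that \<open>R0' \<in> GL\<close>]] by (simp add: g_def)
  qed
  from this[OF assms] this[OF mat_1_GL_state] show ?thesis by simp
qed

end

section \<open>Transitive self-dual theories\<close>

lemma sum_list_in_convex_cone: "convex_cone C \<Longrightarrow> set xs \<subseteq> C \<Longrightarrow> sum_list xs \<in> C"
  by (induction xs) (auto simp: convex_cone_contains_0 convex_cone_add)

lemma pure_effect_in_effects: "pure_effect \<Omega> e \<Longrightarrow> e \<in> effects \<Omega>"
  unfolding pure_effect_def extreme_point_of_def by blast

lemma inner_sum_list_ge_member:
  assumes "\<forall>e\<in>set es. e \<in> effects \<Omega>" and "e \<in> set es" and "w \<in> \<Omega>"
  shows "e \<bullet> w \<le> sum_list es \<bullet> w"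
proof -
  have "e \<bullet> w \<le> sum_list (map (\<lambda>e. e \<bullet> w) es)"
    using assms effect_nonneg by (intro member_le_sum_list) auto
  moreover have "sum_list es \<bullet> w = sum_list (map (\<lambda>e. e \<bullet> w) es)"
    by (induction es) (auto simp: inner_add_left)
  ultimately show ?thesis by simp
qed


locale transitive_self_dual_gpt = GL_haar \<Omega> \<mu>
  for \<Omega> :: "(real^'n) set" and \<mu> :: "(real^'n^'n) measure" +
  assumes transitive: "transitive_state_space \<Omega>"
    and self_dual: "positive_cone \<Omega> = {y. \<forall>x\<in>positive_cone \<Omega>. 0 \<le> GL_inner \<mu> x y}"
begin

abbreviation "u \<equiv> unit_effect \<Omega>"

lemma GL_inner_positive_cone_nonneg:
  "x \<in> positive_cone \<Omega> \<Longrightarrow> y \<in> positive_cone \<Omega> \<Longrightarrow> 0 \<le> GL_inner \<mu> x y"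
  using self_dual[THEN equalityD1] by blast

lemma positive_cone_scaleR: "0 \<le> c \<Longrightarrow> w \<in> \<Omega> \<Longrightarrow> c *\<^sub>R w \<in> positive_cone \<Omega>"
  unfolding positive_cone_def by blast

lemma state_in_positive_cone: "w \<in> \<Omega> \<Longrightarrow> w \<in> positive_cone \<Omega>"
  using positive_cone_scaleR[of 1 w] by simp

lemma positive_coneE:
  assumes "y \<in> positive_cone \<Omega>"
  obtains c w where "0 \<le> c" and "w \<in> \<Omega>" and "y = c *\<^sub>R w"
  using assms unfolding positive_cone_def by blast

lemma invertible_gram: "invertible gram"
proof -
  have "x = 0" if "gram *v x = 0" for x
    using GL_inner_self_pos[of x] that by (auto simp: GL_inner_gram)
  then show ?thesis by (simp add: invertible_left_inverse matrix_left_invertible_ker)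
qed

text \<open>The paper's \<open>\<hat>e\<close>: the vector representing the effect \<open>e\<close> with respect to \<open>GL_inner \<mu>\<close>.\<close>

definition dual_vector :: "real^'n \<Rightarrow> real^'n" where
  "dual_vector e = matrix_inv gram *v e"

lemma gram_dual_vector: "gram *v dual_vector e = e"
proof -
  have "gram ** matrix_inv gram = mat 1"
    using invertible_gram someI_ex[of "\<lambda>B. gram ** B = mat 1 \<and> B ** gram = mat 1"]
    unfolding invertible_def matrix_inv_def by blast
  then show ?thesis by (simp add: dual_vector_def matrix_vector_mul_assoc)
qed

lemma gram_inj: "gram *v x = gram *v y \<Longrightarrow> x = y"
  using invertible_gram by (metis invertible_def matrix_vector_mul_assoc matrix_vector_mul_lid)

lemma linear_dual_vector: "linear dual_vector"
  unfolding dual_vector_def by (rule matrix_vector_mul_linear)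

lemma GL_inner_dual_vector: "GL_inner \<mu> x (dual_vector e) = e \<bullet> x"
  by (simp add: GL_inner_gram gram_dual_vector inner_commute)

lemma inner_dual_vector_commute: "f \<bullet> dual_vector e = e \<bullet> dual_vector f"
  using GL_inner_dual_vector[of "dual_vector e" f] GL_inner_dual_vector[of "dual_vector f" e]
    GL_inner_commute by (simp add: inner_commute)

lemma dual_vector_effect_in_cone:
  assumes "e \<in> effects \<Omega>"
  shows "dual_vector e \<in> positive_cone \<Omega>"
proof -
  have "0 \<le> GL_inner \<mu> x (dual_vector e)" if x: "x \<in> positive_cone \<Omega>" for x
  proof -
    obtain c w where "0 \<le> c" "w \<in> \<Omega>" "x = c *\<^sub>R w"
      using x by (rule positive_coneE)
    then show ?thesis using effect_nonneg[OF assms \<open>w \<in> \<Omega>\<close>] by (simp add: GL_inner_dual_vector)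
  qed
  then show ?thesis by (subst self_dual) blast
qed

lemma GL_inner_self_extreme_eq:
  assumes "w1 extreme_point_of \<Omega>" and "w2 extreme_point_of \<Omega>"
  shows "GL_inner \<mu> w1 w1 = GL_inner \<mu> w2 w2"
proof -
  obtain T where "T \<in> GL" "T *v w1 = w2"
    using transitive assms unfolding transitive_state_space_def by blast
  then show ?thesis using GL_inner_self_invariant[of T w1] by simp
qed

text \<open>At an extreme point \<open>x\<close>, transitivity gives \<open>GL_inner \<mu> x x = GL_inner \<mu> w0 w0\<close>, so the
  bound is \<open>0 \<le> GL_inner \<mu> (w0 - x) (w0 - x)\<close>; Krein-Milman extends it to all of \<open>\<Omega>\<close>.\<close>

lemma GL_inner_le_extreme:
  assumes w0: "w0 extreme_point_of \<Omega>" and "w \<in> \<Omega>"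
  shows "GL_inner \<mu> w0 w \<le> GL_inner \<mu> w0 w0"
proof -
  have "compact \<Omega>" "convex \<Omega>" using state_space unfolding state_space_def by auto
  then have "w \<in> convex hull {x. x extreme_point_of \<Omega>}"
    using Krein_Milman_Minkowski \<open>w \<in> \<Omega>\<close> by blast
  moreover have "convex_on (convex hull {x. x extreme_point_of \<Omega>}) (\<lambda>x. GL_inner \<mu> w0 x)"
  proof -
    have "GL_inner \<mu> w0 x = x \<bullet> (gram *v w0)" for x
      using GL_inner_commute[of w0 x] GL_inner_gram[of x w0] by simp
    then show ?thesis by (simp add: convex_on_def inner_add_left)
  qed
  moreover have "\<forall>x\<in>{x. x extreme_point_of \<Omega>}. GL_inner \<mu> w0 x \<le> GL_inner \<mu> w0 w0"
  proof
    fix x assume "x \<in> {x. x extreme_point_of \<Omega>}"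
    then have x: "x extreme_point_of \<Omega>" by simp
    have "0 \<le> GL_inner \<mu> (w0 - x) (w0 - x)" by (rule GL_inner_self_nonneg)
    also have "\<dots> = GL_inner \<mu> w0 w0 - 2 * GL_inner \<mu> w0 x + GL_inner \<mu> x x"
      unfolding GL_inner_gram using GL_inner_gram[of w0 x] GL_inner_gram[of x w0] GL_inner_commute[of x w0]
      by (simp add: matrix_vector_mult_diff_distrib inner_diff_left inner_diff_right)
    finally show "GL_inner \<mu> w0 x \<le> GL_inner \<mu> w0 w0"
      using GL_inner_self_extreme_eq[OF w0 x] by linarith
  qed
  ultimately show ?thesis using convex_on_convex_hull_bound by blast
qed

lemma dual_vector_indecomposable_split:
  assumes indec: "indecomposable_effect \<Omega> e"
    and "y1 \<in> positive_cone \<Omega>" "y2 \<in> positive_cone \<Omega>" and split: "dual_vector e = y1 + y2"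
  obtains k where "y1 = k *\<^sub>R dual_vector e"
proof -
  have "e \<in> effects \<Omega>" using indec unfolding indecomposable_effect_def by blast
  define e1 where "e1 = gram *v y1"
  define e2 where "e2 = gram *v y2"
  have "e = e1 + e2"
    using gram_dual_vector[of e] split by (simp add: e1_def e2_def matrix_vector_right_distrib)
  have eval: "e1 \<bullet> w = GL_inner \<mu> w y1" "e2 \<bullet> w = GL_inner \<mu> w y2" for w
    by (simp_all add: e1_def e2_def GL_inner_gram inner_commute)
  have nonneg: "0 \<le> e1 \<bullet> w" "0 \<le> e2 \<bullet> w" if "w \<in> \<Omega>" for w
    unfolding eval using GL_inner_positive_cone_nonneg state_in_positive_cone[OF that] assms(2,3)
    by auto
  have "e \<bullet> w \<le> 1" if "w \<in> \<Omega>" for w using effect_le_1[OF \<open>e \<in> effects \<Omega>\<close> that] .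
  then have "e1 \<in> effects \<Omega>" "e2 \<in> effects \<Omega>"
    unfolding effects_def using nonneg \<open>e = e1 + e2\<close> by (fastforce simp: inner_add_left)+
  then obtain k where "e1 = k *\<^sub>R e"
    using indec \<open>e = e1 + e2\<close> unfolding indecomposable_effect_def by blast
  then have "gram *v y1 = gram *v (k *\<^sub>R dual_vector e)"
    by (simp add: e1_def matrix_vector_mult_scaleR gram_dual_vector)
  then show ?thesis using gram_inj that by blast
qed

text \<open>The state representing an indecomposable effect is pure: a proper convex decomposition
  of it would split \<open>dual_vector e\<close> into two non-proportional elements of the cone.\<close>

lemma dual_vector_indecomposable_extreme:
  assumes indec: "indecomposable_effect \<Omega> e"
    and "0 < c" and "w \<in> \<Omega>" and dual: "dual_vector e = c *\<^sub>R w"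
  shows "w extreme_point_of \<Omega>"
proof -
  have component_eq: "a = w" if "a \<in> \<Omega>" "b \<in> \<Omega>" "0 < s" "0 \<le> r" "w = s *\<^sub>R a + r *\<^sub>R b" for a b s r
  proof -
    have split: "dual_vector e = (c * s) *\<^sub>R a + (c * r) *\<^sub>R b"
      using dual that(5) by (simp add: scaleR_add_right)
    have "(c * s) *\<^sub>R a \<in> positive_cone \<Omega>" "(c * r) *\<^sub>R b \<in> positive_cone \<Omega>"
      using \<open>0 < c\<close> that by (auto intro: positive_cone_scaleR)
    then obtain k where k: "(c * s) *\<^sub>R a = k *\<^sub>R dual_vector e"
      by (rule dual_vector_indecomposable_split[OF indec _ _ split])
    then have "(c * s) *\<^sub>R a = (k * c) *\<^sub>R w" using dual by simp
    moreover from this have "c * s = k * c"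
      using unit_effect_state[OF state_space that(1)] unit_effect_state[OF state_space \<open>w \<in> \<Omega>\<close>]
      by (metis inner_scaleR_right mult.right_neutral)
    ultimately show "a = w" using \<open>0 < c\<close> \<open>0 < s\<close> by simp
  qed
  show ?thesis
    unfolding extreme_point_of_def
  proof (intro conjI ballI notI \<open>w \<in> \<Omega>\<close>)
    fix a b assume "a \<in> \<Omega>" "b \<in> \<Omega>" "w \<in> open_segment a b"
    then obtain t where "a \<noteq> b" "0 < t" "t < 1" "w = (1 - t) *\<^sub>R a + t *\<^sub>R b"
      unfolding in_segment by blast
    then have "a = w" "b = w"
      using component_eq[of a b "1 - t" t] component_eq[of b a t "1 - t"] \<open>a \<in> \<Omega>\<close> \<open>b \<in> \<Omega>\<close>
      by (simp_all add: add.commute)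
    then show False using \<open>a \<noteq> b\<close> by simp
  qed
qed

text \<open>A pure indecomposable effect attains its maximum on \<open>\<Omega>\<close> at the state representing it;
  purity forces that maximum to be \<open>1\<close>, since otherwise \<open>e\<close> would lie strictly between \<open>0\<close> and
  a rescaled effect.\<close>

lemma pure_indecomposable_dual_vector:
  assumes pure: "pure_effect \<Omega> e" and indec: "indecomposable_effect \<Omega> e"
  obtains c w where "0 < c" and "w \<in> \<Omega>" and "dual_vector e = c *\<^sub>R w" and "e \<bullet> w = 1"
proof -
  have "e \<in> effects \<Omega>" "e \<noteq> 0" using indec unfolding indecomposable_effect_def by blast+
  obtain c w where "0 \<le> c" "w \<in> \<Omega>" and dual: "dual_vector e = c *\<^sub>R w"
    using dual_vector_effect_in_cone[OF \<open>e \<in> effects \<Omega>\<close>] by (rule positive_coneE)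
  have "c \<noteq> 0"
    using dual gram_dual_vector[of e] \<open>e \<noteq> 0\<close> by force
  then have "0 < c" using \<open>0 \<le> c\<close> by simp
  have eval: "e \<bullet> x = c * GL_inner \<mu> w x" for x
    using GL_inner_dual_vector[of x e] GL_inner_commute[of w x] GL_inner_gram[of x "c *\<^sub>R w"]
      GL_inner_gram[of x w] dual
    by (simp add: matrix_vector_mult_scaleR)
  have "w extreme_point_of \<Omega>"
    by (rule dual_vector_indecomposable_extreme[OF indec \<open>0 < c\<close> \<open>w \<in> \<Omega>\<close> dual])
  then have below: "e \<bullet> x \<le> e \<bullet> w" if "x \<in> \<Omega>" for x
    unfolding eval using GL_inner_le_extreme that \<open>0 < c\<close> by (simp add: mult_left_mono)
  define m where "m = e \<bullet> w"
  have "0 < m"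
    unfolding m_def eval using \<open>0 < c\<close> GL_inner_self_pos unit_effect_state[OF state_space \<open>w \<in> \<Omega>\<close>]
    by (metis inner_zero_right mult_pos_pos zero_neq_one)
  have "m = 1"
  proof (rule ccontr)
    assume "m \<noteq> 1"
    then have "m < 1" using effect_le_1[OF \<open>e \<in> effects \<Omega>\<close> \<open>w \<in> \<Omega>\<close>] unfolding m_def by simp
    have "0 \<in> effects \<Omega>" unfolding effects_def by simp
    moreover have "(1 / m) *\<^sub>R e \<in> effects \<Omega>"
      unfolding effects_def using below effect_nonneg[OF \<open>e \<in> effects \<Omega>\<close>] \<open>0 < m\<close>
      by (auto simp: m_def divide_le_eq_1)
    moreover have "e \<in> open_segment 0 ((1 / m) *\<^sub>R e)"
      unfolding in_segment using \<open>e \<noteq> 0\<close> \<open>0 < m\<close> \<open>m < 1\<close> by (intro conjI exI[of _ m]) auto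
    ultimately show False using pure unfolding pure_effect_def extreme_point_of_def by blast
  qed
  then show ?thesis using that \<open>0 < c\<close> \<open>w \<in> \<Omega>\<close> dual unfolding m_def by blast
qed

definition dual_in_certainty_cone :: "real^'n \<Rightarrow> bool" where
  "dual_in_certainty_cone e \<longleftrightarrow> dual_vector e \<in> convex_cone hull {w \<in> \<Omega>. e \<bullet> w = 1}"

lemma dual_in_certainty_cone_sum_list:
  assumes es: "\<forall>e\<in>set es. pure_effect \<Omega> e \<and> indecomposable_effect \<Omega> e"
    and "sum_list es \<in> effects \<Omega>"
  shows "dual_in_certainty_cone (sum_list es)"
proof -
  let ?C = "convex_cone hull {w \<in> \<Omega>. sum_list es \<bullet> w = 1}"
  have "dual_vector e \<in> ?C" if "e \<in> set es" for e
  proof -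
    have "pure_effect \<Omega> e" "indecomposable_effect \<Omega> e" using es that by auto
    then obtain c w where "0 < c" "w \<in> \<Omega>" "dual_vector e = c *\<^sub>R w" "e \<bullet> w = 1"
      by (rule pure_indecomposable_dual_vector)
    moreover have "e \<bullet> w \<le> sum_list es \<bullet> w"
      using es pure_effect_in_effects that \<open>w \<in> \<Omega>\<close> by (intro inner_sum_list_ge_member) auto
    then have "sum_list es \<bullet> w = 1"
      using effect_le_1[OF assms(2) \<open>w \<in> \<Omega>\<close>] \<open>e \<bullet> w = 1\<close> by simp
    ultimately show ?thesis by (auto intro: convex_cone_hull_mul hull_inc)
  qed
  then have "sum_list (map dual_vector es) \<in> ?C"
    by (intro sum_list_in_convex_cone convex_cone_convex_cone_hull) auto
  moreover have "dual_vector (sum_list es) = sum_list (map dual_vector es)"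
    by (induction es) (simp_all add: dual_vector_def matrix_vector_right_distrib)
  ultimately show ?thesis unfolding dual_in_certainty_cone_def by simp
qed

text \<open>For the complement \<open>f = u - \<Sum>es\<close>, the state representing \<open>f\<close> is orthogonal to the
  states representing the \<open>e \<in> es\<close>, on which \<open>f\<close> vanishes, hence \<open>f\<close> is certain on it.\<close>

lemma dual_in_certainty_cone_complement:
  assumes es: "\<forall>e\<in>set es. pure_effect \<Omega> e \<and> indecomposable_effect \<Omega> e"
    and f: "u - sum_list es \<in> effects \<Omega>"
  shows "dual_in_certainty_cone (u - sum_list es)"
proof -
  let ?f = "u - sum_list es"
  obtain c w where "0 \<le> c" "w \<in> \<Omega>" and dual: "dual_vector ?f = c *\<^sub>R w"
    using dual_vector_effect_in_cone[OF f] by (rule positive_coneE)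
  define d where "d = dual_vector ?f"
  have orthogonal: "e \<bullet> d = 0" if "e \<in> set es" for e
  proof -
    have "pure_effect \<Omega> e" "indecomposable_effect \<Omega> e" using es that by auto
    then obtain l we where "0 < l" "we \<in> \<Omega>" "dual_vector e = l *\<^sub>R we" "e \<bullet> we = 1"
      by (rule pure_indecomposable_dual_vector)
    have "e \<bullet> we \<le> sum_list es \<bullet> we"
      using es pure_effect_in_effects that \<open>we \<in> \<Omega>\<close> by (intro inner_sum_list_ge_member) auto
    then have "1 \<le> sum_list es \<bullet> we" using \<open>e \<bullet> we = 1\<close> by simp
    then have "?f \<bullet> we = 0"
      using effect_nonneg[OF f \<open>we \<in> \<Omega>\<close>] unit_effect_state[OF state_space \<open>we \<in> \<Omega>\<close>]
      by (simp add: inner_diff_left)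
    then show ?thesis
      using inner_dual_vector_commute[of e ?f] \<open>dual_vector e = l *\<^sub>R we\<close>
      by (simp add: d_def inner_commute)
  qed
  have "sum_list es' \<bullet> d = 0" if "set es' \<subseteq> set es" for es'
    using that by (induction es') (auto simp: inner_add_left orthogonal)
  then have "sum_list es \<bullet> dual_vector ?f = 0" unfolding d_def by blast
  then have "(u - ?f) \<bullet> (c *\<^sub>R w) = 0" using dual by simp
  then have "c * (1 - ?f \<bullet> w) = 0"
    using unit_effect_state[OF state_space \<open>w \<in> \<Omega>\<close>] by (simp add: inner_diff_left)
  then have "c = 0 \<or> ?f \<bullet> w = 1" by simp
  then show ?thesis
  proof
    assume "c = 0"
    then show ?thesis
      using dual convex_cone_hull_contains_0 unfolding dual_in_certainty_cone_def by simp
  next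
    assume "?f \<bullet> w = 1"
    then have "w \<in> convex_cone hull {w \<in> \<Omega>. ?f \<bullet> w = 1}" using \<open>w \<in> \<Omega>\<close> by (simp add: hull_inc)
    then show ?thesis
      using dual \<open>0 \<le> c\<close> convex_cone_hull_mul unfolding dual_in_certainty_cone_def by simp
  qed
qed

lemma ideal_observable_dual_in_certainty_cone:
  assumes "ideal_observable \<Omega> X f" and "a \<in> X"
  shows "dual_in_certainty_cone (f a)"
proof -
  have "f a \<in> effects \<Omega>" using assms unfolding ideal_observable_def observable_def by blast
  moreover obtain es where "\<forall>e\<in>set es. pure_effect \<Omega> e \<and> indecomposable_effect \<Omega> e"
    and "f a = sum_list es \<or> f a = u - sum_list es"
    using assms unfolding ideal_observable_def by blast
  ultimately show ?thesis
    using dual_in_certainty_cone_sum_list dual_in_certainty_cone_complement by metis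
qed

text \<open>A bound valid at every state where \<open>e\<close> is certain transfers to the representing vector,
  since \<open>{y. y \<bullet> z \<le> D * (u \<bullet> y)}\<close> is a convex cone containing those states.\<close>

lemma dual_in_certainty_cone_bound:
  assumes "dual_in_certainty_cone e" and bound: "\<And>w. w \<in> \<Omega> \<Longrightarrow> e \<bullet> w = 1 \<Longrightarrow> z \<bullet> w \<le> D"
  shows "dual_vector e \<bullet> z \<le> D * (u \<bullet> dual_vector e)"
proof -
  let ?K = "{y. y \<bullet> z \<le> D * (u \<bullet> y)}"
  have "{w \<in> \<Omega>. e \<bullet> w = 1} \<subseteq> ?K"
    using bound unit_effect_state[OF state_space] by (auto simp: inner_commute)
  moreover have "convex_cone ?K"
    unfolding convex_cone_iff by (auto simp: inner_add_left inner_add_right distrib_left mult_left_mono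
        mult.left_commute add_mono)
  ultimately have "convex_cone hull {w \<in> \<Omega>. e \<bullet> w = 1} \<subseteq> ?K"
    by (rule hull_minimal)
  then show ?thesis using assms(1) unfolding dual_in_certainty_cone_def by blast
qed

lemma unit_effect_dual_pos: "0 < u \<bullet> dual_vector u"
proof -
  obtain w where "w \<in> \<Omega>" using state_space_nonempty[OF state_space] by blast
  then have "u \<noteq> 0" using unit_effect_state[OF state_space] by fastforce
  then have "dual_vector u \<noteq> 0" using gram_dual_vector[of u] by auto
  then show ?thesis
    using GL_inner_self_pos[of "dual_vector u"] unfolding GL_inner_dual_vector by simp
qed

lemma observable_dual_decomposition:
  assumes "observable \<Omega> P m"
  obtains \<kappa> \<sigma> where "\<forall>p\<in>P. 0 \<le> \<kappa> p \<and> \<sigma> p \<in> \<Omega> \<and> dual_vector (m p) = \<kappa> p *\<^sub>R \<sigma> p"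
    and "(\<Sum>p\<in>P. \<kappa> p) = u \<bullet> dual_vector u"
proof -
  have "\<forall>p\<in>P. \<exists>c w. 0 \<le> c \<and> w \<in> \<Omega> \<and> dual_vector (m p) = c *\<^sub>R w"
    using assms dual_vector_effect_in_cone positive_coneE unfolding observable_def by metis
  then obtain \<kappa> \<sigma> where decomp: "\<forall>p\<in>P. 0 \<le> \<kappa> p \<and> \<sigma> p \<in> \<Omega> \<and> dual_vector (m p) = \<kappa> p *\<^sub>R \<sigma> p"
    by metis
  have "(\<Sum>p\<in>P. \<kappa> p) = (\<Sum>p\<in>P. u \<bullet> dual_vector (m p))"
    using decomp unit_effect_state[OF state_space] by (intro sum.cong) auto
  also have "\<dots> = u \<bullet> dual_vector (\<Sum>p\<in>P. m p)"
    by (simp add: inner_sum_right linear_sum[OF linear_dual_vector])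
  finally show ?thesis using that decomp assms unfolding observable_def by auto
qed

lemma weighted_error_le:
  fixes d :: "'a \<Rightarrow> 'a \<Rightarrow> real" and \<pi> :: "'p \<Rightarrow> 'a"
  assumes "ideal_observable \<Omega> X f" and "finite P"
    and decomp: "\<And>p. p \<in> P \<Longrightarrow> dual_vector (m p) = \<kappa> p *\<^sub>R \<sigma> p"
    and certain_bound: "\<And>a w. a \<in> X \<Longrightarrow> w \<in> \<Omega> \<Longrightarrow> f a \<bullet> w = 1 \<Longrightarrow>
      (\<Sum>p\<in>P. d a (\<pi> p) * (m p \<bullet> w)) \<le> D"
  shows "(\<Sum>p\<in>P. \<kappa> p * (\<Sum>a\<in>X. d a (\<pi> p) * (f a \<bullet> \<sigma> p))) \<le> D * (u \<bullet> dual_vector u)"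
proof -
  define z where "z a = (\<Sum>p\<in>P. d a (\<pi> p) *\<^sub>R m p)" for a
  have "\<kappa> p * (d a (\<pi> p) * (f a \<bullet> \<sigma> p)) = d a (\<pi> p) * (dual_vector (f a) \<bullet> m p)"
    if "p \<in> P" for p a
    using decomp[OF that] inner_dual_vector_commute[of "f a" "m p"] by (simp add: inner_commute)
  then have "(\<Sum>p\<in>P. \<kappa> p * (\<Sum>a\<in>X. d a (\<pi> p) * (f a \<bullet> \<sigma> p)))
      = (\<Sum>p\<in>P. \<Sum>a\<in>X. d a (\<pi> p) * (dual_vector (f a) \<bullet> m p))"
    unfolding sum_distrib_left by (intro sum.cong refl) blast
  also have "\<dots> = (\<Sum>a\<in>X. dual_vector (f a) \<bullet> z a)"
    unfolding z_def by (subst sum.swap) (simp add: inner_sum_right)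
  also have "\<dots> \<le> (\<Sum>a\<in>X. D * (u \<bullet> dual_vector (f a)))"
  proof (rule sum_mono)
    fix a assume "a \<in> X"
    show "dual_vector (f a) \<bullet> z a \<le> D * (u \<bullet> dual_vector (f a))"
    proof (rule dual_in_certainty_cone_bound)
      show "dual_in_certainty_cone (f a)"
        using ideal_observable_dual_in_certainty_cone[OF assms(1) \<open>a \<in> X\<close>] .
      show "z a \<bullet> w \<le> D" if "w \<in> \<Omega>" "f a \<bullet> w = 1" for w
        using certain_bound[OF \<open>a \<in> X\<close> that] by (simp add: z_def inner_sum_left)
    qed
  qed
  also have "\<dots> = D * (u \<bullet> dual_vector (\<Sum>a\<in>X. f a))"
    by (simp add: sum_distrib_left inner_sum_right linear_sum[OF linear_dual_vector])
  finally show ?thesis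
    using assms(1) unfolding ideal_observable_def observable_def by simp
qed

lemma marginal_weighted_error_le:
  fixes d :: "'a \<Rightarrow> 'a \<Rightarrow> real" and \<pi> :: "'p \<Rightarrow> 'a"
  assumes "finite X" and "Metric_space X d" and f: "ideal_observable \<Omega> X f" and "finite P"
    and decomp: "\<And>p. p \<in> P \<Longrightarrow> dual_vector (m p) = \<kappa> p *\<^sub>R \<sigma> p"
    and ft: "\<forall>a\<in>X. ft a \<in> effects \<Omega>" "(\<Sum>a\<in>X. ft a) = u"
    and marginal: "\<And>a w. (\<Sum>p\<in>P. d a (\<pi> p) * (m p \<bullet> w)) = (\<Sum>a'\<in>X. d a' a * (ft a' \<bullet> w))"
  shows "(\<Sum>p\<in>P. \<kappa> p * (\<Sum>a\<in>X. d a (\<pi> p) * (f a \<bullet> \<sigma> p)))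
    \<le> werner_D \<Omega> X d ft f * (u \<bullet> dual_vector u)"
proof (rule weighted_error_le[OF f \<open>finite P\<close> decomp])
  fix a w assume "a \<in> X" "w \<in> \<Omega>" "f a \<bullet> w = 1"
  have "\<forall>a\<in>X. f a \<in> effects \<Omega>" "(\<Sum>a\<in>X. f a) = u"
    using f unfolding ideal_observable_def observable_def by auto
  from werner_D_ge_expected_dist[OF state_space assms(1,2) this ft \<open>a \<in> X\<close> \<open>w \<in> \<Omega>\<close> \<open>f a \<bullet> w = 1\<close>]
  show "(\<Sum>p\<in>P. d a (\<pi> p) * (m p \<bullet> w)) \<le> werner_D \<Omega> X d ft f"
    unfolding marginal .
qed

lemma joint_error_budgets:
  fixes A :: "'a set" and dA :: "'a \<Rightarrow> 'a \<Rightarrow> real" and f :: "'a \<Rightarrow> real^'n"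
    and B :: "'b set" and dB :: "'b \<Rightarrow> 'b \<Rightarrow> real" and g :: "'b \<Rightarrow> real^'n"
    and m :: "'a \<times> 'b \<Rightarrow> real^'n"
  assumes "finite A" and "Metric_space A dA" and "finite B" and "Metric_space B dB"
    and f: "ideal_observable \<Omega> A f" and g: "ideal_observable \<Omega> B g" and m: "observable \<Omega> (A \<times> B) m"
    and decomp: "\<And>p. p \<in> A \<times> B \<Longrightarrow> dual_vector (m p) = \<kappa> p *\<^sub>R \<sigma> p"
    and total: "(\<Sum>p\<in>A \<times> B. \<kappa> p) = u \<bullet> dual_vector u"
  shows "(\<Sum>p\<in>A \<times> B. \<kappa> p * (\<Sum>a\<in>A. dA a (fst p) * (f a \<bullet> \<sigma> p)))
      \<le> werner_D \<Omega> A dA (\<lambda>a. \<Sum>b\<in>B. m (a, b)) f * (\<Sum>p\<in>A \<times> B. \<kappa> p)"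
    and "(\<Sum>p\<in>A \<times> B. \<kappa> p * (\<Sum>b\<in>B. dB b (snd p) * (g b \<bullet> \<sigma> p)))
      \<le> werner_D \<Omega> B dB (\<lambda>b. \<Sum>a\<in>A. m (a, b)) g * (\<Sum>p\<in>A \<times> B. \<kappa> p)"
proof -
  note marginals = marginal_observables[OF state_space \<open>finite A\<close> \<open>finite B\<close> m]
  have "finite (A \<times> B)" using \<open>finite A\<close> \<open>finite B\<close> by simp
  have sum_pairs: "(\<Sum>p\<in>A \<times> B. h p) = (\<Sum>a\<in>A. \<Sum>b\<in>B. h (a, b))" for h :: "'a \<times> 'b \<Rightarrow> real"
    by (simp add: sum.cartesian_product)
  have "(\<Sum>p\<in>A \<times> B. dA a (fst p) * (m p \<bullet> w)) = (\<Sum>a'\<in>A. dA a' a * ((\<Sum>b\<in>B. m (a', b)) \<bullet> w))"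
    for a w
    by (simp add: sum_pairs inner_sum_left sum_distrib_left Metric_space.commute[OF \<open>Metric_space A dA\<close>, of a])
  from marginal_weighted_error_le[OF \<open>finite A\<close> \<open>Metric_space A dA\<close> f \<open>finite (A \<times> B)\<close> decomp
      marginals(1,2) this]
  show "(\<Sum>p\<in>A \<times> B. \<kappa> p * (\<Sum>a\<in>A. dA a (fst p) * (f a \<bullet> \<sigma> p)))
      \<le> werner_D \<Omega> A dA (\<lambda>a. \<Sum>b\<in>B. m (a, b)) f * (\<Sum>p\<in>A \<times> B. \<kappa> p)"
    unfolding total .
  have "(\<Sum>p\<in>A \<times> B. dB b (snd p) * (m p \<bullet> w)) = (\<Sum>b'\<in>B. dB b' b * ((\<Sum>a\<in>A. m (a, b')) \<bullet> w))"
    for b w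
    by (simp add: sum_pairs inner_sum_left sum_distrib_left Metric_space.commute[OF \<open>Metric_space B dB\<close>, of b]
        sum.swap[of _ B])
  from marginal_weighted_error_le[OF \<open>finite B\<close> \<open>Metric_space B dB\<close> g \<open>finite (A \<times> B)\<close> decomp
      marginals(3,4) this]
  show "(\<Sum>p\<in>A \<times> B. \<kappa> p * (\<Sum>b\<in>B. dB b (snd p) * (g b \<bullet> \<sigma> p)))
      \<le> werner_D \<Omega> B dB (\<lambda>b. \<Sum>a\<in>A. m (a, b)) g * (\<Sum>p\<in>A \<times> B. \<kappa> p)"
    unfolding total .
qed

lemma joint_measurement_error_widths:
  fixes A :: "'a set" and dA :: "'a \<Rightarrow> 'a \<Rightarrow> real" and f :: "'a \<Rightarrow> real^'n"
    and B :: "'b set" and dB :: "'b \<Rightarrow> 'b \<Rightarrow> real" and g :: "'b \<Rightarrow> real^'n"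
    and m :: "'a \<times> 'b \<Rightarrow> real^'n"
  assumes "finite A" and "Metric_space A dA" and "finite B" and "Metric_space B dB"
    and f: "ideal_observable \<Omega> A f" and g: "ideal_observable \<Omega> B g"
    and m: "observable \<Omega> (A \<times> B) m" and "0 < \<epsilon>1" and "0 < \<epsilon>2"
  shows "\<exists>\<omega>\<in>\<Omega>.
     werner_D \<Omega> A dA (\<lambda>a. \<Sum>b\<in>B. m (a, b)) f \<ge> \<epsilon>1 / 2 * overall_width A dA f (\<epsilon>1 + \<epsilon>2) \<omega>
   \<and> werner_D \<Omega> B dB (\<lambda>b. \<Sum>a\<in>A. m (a, b)) g \<ge> \<epsilon>2 / 2 * overall_width B dB g (\<epsilon>1 + \<epsilon>2) \<omega>"
proof -
  let ?DF = "werner_D \<Omega> A dA (\<lambda>a. \<Sum>b\<in>B. m (a, b)) f"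
  let ?DG = "werner_D \<Omega> B dB (\<lambda>b. \<Sum>a\<in>A. m (a, b)) g"
  have F: "A \<noteq> {}" "\<forall>a\<in>A. f a \<in> effects \<Omega>" "(\<Sum>a\<in>A. f a) = u"
    and G: "B \<noteq> {}" "\<forall>b\<in>B. g b \<in> effects \<Omega>" "(\<Sum>b\<in>B. g b) = u"
    using f g unfolding ideal_observable_def observable_def by auto
  note marginals = marginal_observables[OF state_space \<open>finite A\<close> \<open>finite B\<close> m]
  have "0 \<le> ?DF" "0 \<le> ?DG"
    using werner_D_nonneg[OF state_space \<open>finite A\<close> F(1) \<open>Metric_space A dA\<close> F(2,3) marginals(1,2)]
      werner_D_nonneg[OF state_space \<open>finite B\<close> G(1) \<open>Metric_space B dB\<close> G(2,3) marginals(3,4)]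
    by auto
  obtain \<kappa> \<sigma> where decomp: "\<forall>p\<in>A \<times> B. 0 \<le> \<kappa> p \<and> \<sigma> p \<in> \<Omega> \<and> dual_vector (m p) = \<kappa> p *\<^sub>R \<sigma> p"
    and total: "(\<Sum>p\<in>A \<times> B. \<kappa> p) = u \<bullet> dual_vector u"
    using observable_dual_decomposition[OF m] by blast
  let ?EF = "\<lambda>p. \<Sum>a\<in>A. dA a (fst p) * (f a \<bullet> \<sigma> p)"
  let ?EG = "\<lambda>p. \<Sum>b\<in>B. dB b (snd p) * (g b \<bullet> \<sigma> p)"
  have state: "\<sigma> p \<in> \<Omega>" and "dual_vector (m p) = \<kappa> p *\<^sub>R \<sigma> p" if "p \<in> A \<times> B" for p
    using decomp that by blast+
  note budgets = joint_error_budgets[OF assms(1-7) this(2) total]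
  have errors_nonneg: "\<forall>p\<in>A \<times> B. 0 \<le> ?EF p \<and> 0 \<le> ?EG p"
    using effect_nonneg[OF _ state] F(2) G(2) Metric_space.nonneg[OF \<open>Metric_space A dA\<close>]
      Metric_space.nonneg[OF \<open>Metric_space B dB\<close>]
    by (auto intro!: sum_nonneg mult_nonneg_nonneg)
  obtain p where "p \<in> A \<times> B"
    and "\<epsilon>1 * ?EF p \<le> (\<epsilon>1 + \<epsilon>2) * ?DF" "\<epsilon>2 * ?EG p \<le> (\<epsilon>1 + \<epsilon>2) * ?DG"
  proof (rule exists_index_within_budgets[OF _ _ _ errors_nonneg \<open>0 \<le> ?DF\<close> \<open>0 \<le> ?DG\<close>
        budgets \<open>0 < \<epsilon>1\<close> \<open>0 < \<epsilon>2\<close>])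
    show "finite (A \<times> B)" using \<open>finite A\<close> \<open>finite B\<close> by simp
    show "\<forall>p\<in>A \<times> B. 0 \<le> \<kappa> p" using decomp by blast
    show "0 < (\<Sum>p\<in>A \<times> B. \<kappa> p)" unfolding total by (rule unit_effect_dual_pos)
  qed
  moreover have "\<sigma> p \<in> \<Omega>" "fst p \<in> A" "snd p \<in> B" using state \<open>p \<in> A \<times> B\<close> by auto
  moreover have "0 < \<epsilon>1 + \<epsilon>2" using \<open>0 < \<epsilon>1\<close> \<open>0 < \<epsilon>2\<close> by simp
  ultimately show ?thesis
    using overall_width_le_observable[OF state_space \<open>finite A\<close> \<open>Metric_space A dA\<close> F(2,3)
        \<open>fst p \<in> A\<close> \<open>\<sigma> p \<in> \<Omega>\<close> \<open>0 < \<epsilon>1\<close> \<open>0 < \<epsilon>1 + \<epsilon>2\<close> \<open>0 \<le> ?DF\<close>]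
      overall_width_le_observable[OF state_space \<open>finite B\<close> \<open>Metric_space B dB\<close> G(2,3)
        \<open>snd p \<in> B\<close> \<open>\<sigma> p \<in> \<Omega>\<close> \<open>0 < \<epsilon>2\<close> \<open>0 < \<epsilon>1 + \<epsilon>2\<close> \<open>0 \<le> ?DG\<close>]
    by auto
qed

end

theorem corollary3p1:
  fixes \<Omega> :: "(real^'n) set"
    and A :: "'a set" and dA :: "'a \<Rightarrow> 'a \<Rightarrow> real" and f :: "'a \<Rightarrow> real^'n"
    and B :: "'b set" and dB :: "'b \<Rightarrow> 'b \<Rightarrow> real" and g :: "'b \<Rightarrow> real^'n"
    and m :: "'a \<times> 'b \<Rightarrow> real^'n"
    and \<epsilon>1 \<epsilon>2 :: real
  assumes "state_space \<Omega>"
    and "transitive_state_space \<Omega>"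
    and "self_dual_GL \<Omega>"
    and "finite A" and "Metric_space A dA"
    and "finite B" and "Metric_space B dB"
    and "ideal_observable \<Omega> A f"
    and "ideal_observable \<Omega> B g"
    and "observable \<Omega> (A \<times> B) m"
    and "0 < \<epsilon>1" and "\<epsilon>1 \<le> 1" and "0 < \<epsilon>2" and "\<epsilon>2 \<le> 1" and "\<epsilon>1 + \<epsilon>2 \<le> 1"
  shows "\<exists>\<omega>\<in>\<Omega>.
     werner_D \<Omega> A dA (\<lambda>a. \<Sum>b\<in>B. m (a, b)) f \<ge> \<epsilon>1 / 2 * overall_width A dA f (\<epsilon>1 + \<epsilon>2) \<omega>
   \<and> werner_D \<Omega> B dB (\<lambda>b. \<Sum>a\<in>A. m (a, b)) g \<ge> \<epsilon>2 / 2 * overall_width B dB g (\<epsilon>1 + \<epsilon>2) \<omega>"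
proof -
  obtain \<mu> where "haar_GL \<Omega> \<mu>"
    and "positive_cone \<Omega> = {y. \<forall>x\<in>positive_cone \<Omega>. 0 \<le> GL_inner \<mu> x y}"
    using assms(3) unfolding self_dual_GL_def by blast
  then interpret transitive_self_dual_gpt \<Omega> \<mu>
    using assms(1,2) by unfold_locales
  show ?thesis
    by (rule joint_measurement_error_widths[OF assms(4-11,13)])
qed

end
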